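(* Consider the two-tier network model described in the context, with typical user at the origin. Then the probabilities that the typical user is associated with a macro BS via a LoS link, with a macro BS via a NLoS link, with a small cell BS via a LoS link, and with a small cell BS via a NLoS link are, respectively, \begin{align*} \mathcal{A}_{m}^{L} := \mathbb{P}[E_{m}^{L}] &= 2\pi\lambda_{m}\int_0^\infty r\,\mathbb{P}_{m}^{L}(r)\,\zeta_1\!\left(r,\,k_1 r^{\alpha^{L}/\alpha^{NL}}\right)\zeta_2\!\left(k_2 r,\,k_1k_3 r^{\alpha^{L}/\alpha^{NL}}\right)dr,\\ \mathcal{A}_{m}^{NL} := \mathbb{P}[E_{m}^{NL}] &= 2\pi\lambda_{m}\int_0^\infty r\,(1-\mathbb{P}_{m}^{L}(r))\,\zeta_1\!\left(k_4 r^{\alpha^{NL}/\alpha^{L}},\,r\right)\zeta_2\!\left(k_2k_4 r^{\alpha^{NL}/\alpha^{L}},\,k_3 r\right)dr,\\ \mathcal{A}_{s}^{L} := \mathbb{P}[E_{s}^{L}] &= 2\pi\lambda_{s}\int_0^\infty r\,\mathbb{P}_{s}^{L}(r)\,\zeta_1\!\left(r/k_2,\,(k_1/k_3) r^{\alpha^{L}/\alpha^{NL}}\right)\zeta_2\!\left(r,\,k_1 r^{\alpha^{L}/\alpha^{NL}}\right)dr,\\ \mathcal{A}_{s}^{NL} := \mathbb{P}[E_{s}^{NL}] &= 2\pi\lambda_{s}\int_0^\infty r\,(1-\mathbb{P}_{s}^{L}(r))\,\zeta_1\!\left((k_4/k_2) r^{\alpha^{NL}/\alpha^{L}},\,r/k_3\right)\zeta_2\!\left(k_4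 r^{\alpha^{NL}/\alpha^{L}},\,r\right)dr, \end{align*} where \[ \zeta_1(x_1,x_2) := \exp\!\left(-\int_0^{x_1}\lambda_{m}\mathbb{P}_{m}^{L}(u)\,2\pi u\,du-\int_0^{x_2}\lambda_{m}(1-\mathbb{P}_{m}^{L}(u))\,2\pi u\,du\right), \] \[ \zeta_2(x_1,x_2) := \exp\!\left(-\int_0^{x_1}\lambda_{s}\mathbb{P}_{s}^{L}(u)\,2\pi u\,du-\int_0^{x_2}\lambda_{s}(1-\mathbb{P}_{s}^{L}(u))\,2\pi u\,du\right), \] and $k_1 := (L^{NL}/L^{L})^{1/\alpha^{NL}}$, $k_2 := (BP_{s}/P_{m})^{1/\alpha^{L}}$, $k_3 := (BP_{s}/P_{m})^{1/\alpha^{NL}}$, $k_4 := (L^{L}/L^{NL})^{1/\alpha^{L}}$.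
   Context: Macro base stations (MBSs) are located according to a homogeneous Poisson point process (PPP) $\Phi_{m}$ in $\mathbb{R}^2$ of density $\lambda_{m}>0$, and small cell base stations (SCBs) according to an independent homogeneous PPP $\Phi_{s}$ of density $\lambda_{s}>0$. A typical user is located at the origin. Given functions $\mathbb{P}_{m}^{L},\mathbb{P}_{s}^{L}:[0,\infty)\to[0,1]$, each MBS at distance $r$ from the origin independently (of everything else) has a line-of-sight (LoS) link to the typical user with probability $\mathbb{P}_{m}^{L}(r)$ and a non-line-of-sight (NLoS) link otherwise; each SCB at distance $r$ independently has a LoS link with probability $\mathbb{P}_{s}^{L}(r)$ and NLoS otherwise. Constants: transmit powers $P_{m},P_{s}>0$, bias factor $B>0$, path loss constants $L^{L},L^{NL}>0$ and exponents $\alpha^{L},\alpha^{NL}>0$. The average biased received power at the typical user from an MBS at distance $r$ is $P_{m}L^{L}r^{-\alpha^{L}}$ if its link is LoS and $P_{m}L^{NL}r^{-\alpha^{NL}}$ if NLoS; from an SCB at distance $r$ it is $BP_{s}L^{L}r^{-\alpha^{L}}$ if LoS and $BP_{s}L^{NL}r^{-\alpha^{NL}}$ if NLoS. The typical user associates with the BS (among all MBSs and SCBs) providing the largest average biased received power. $E_{m}^{L}$ (resp. $E_{m}^{NL}$, $E_{s}^{L}$, $E_{s}^{NL}$) denotes the event that this serving BS is an MBS with a LoS link (resp. an MBS with a NLoS link, an SCB with a LoS link, an SCB with a NLoS link). *)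

theory Defs
  imports "HOL-Probability.Probability"
begin

type_synonym pt = "real^2"

text \<open>Points of a marked process are pairs (location, LoS flag); True = LoS.\<close>

definition cnt :: "('a \<Rightarrow> (pt \<times> bool) set) \<Rightarrow> (pt \<times> bool) set \<Rightarrow> 'a \<Rightarrow> nat" where
  "cnt \<Psi> A \<omega> = card (\<Psi> \<omega> \<inter> A)"

definition mark_space :: "(pt \<times> bool) measure" where
  "mark_space = lborel \<Otimes>\<^sub>M count_space UNIV"

text \<open>Intensity measure of a homogeneous PPP of density lam on the plane whose
  points are independently marked LoS with probability pL(distance to origin):
  lam * Lebesgue (x) Bernoulli(pL(norm x)).\<close>
definition marked_intensity :: "real \<Rightarrow> (real \<Rightarrow> real) \<Rightarrow> (pt \<times> bool) measure" where
  "marked_intensity lam pL =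
     density mark_space (\<lambda>(x, b). ennreal (lam * (if b then pL (norm x) else 1 - pL (norm x))))"

definition locally_finite :: "(pt \<times> bool) set \<Rightarrow> bool" where
  "locally_finite S \<longleftrightarrow> (\<forall>R::real. finite {z \<in> S. norm (fst z) \<le> R})"

text \<open>Two independent independently-marked homogeneous PPPs (macro tier Psi_m, small-cell
  tier Psi_s): counts in pairwise disjoint sets of finite intensity, taken over both
  tiers jointly, are mutually independent and Poisson distributed with the intensity
  measure as mean.\<close>
definition two_tier_marked_ppp ::
  "'a measure \<Rightarrow> ('a \<Rightarrow> (pt \<times> bool) set) \<Rightarrow> (pt \<times> bool) measure
     \<Rightarrow> ('a \<Rightarrow> (pt \<times> bool) set) \<Rightarrow> (pt \<times> bool) measure \<Rightarrow> bool" where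
  "two_tier_marked_ppp M \<Psi>m \<mu>m \<Psi>s \<mu>s \<longleftrightarrow>
     prob_space M \<and>
     (\<forall>\<omega>\<in>space M. locally_finite (\<Psi>m \<omega>) \<and> locally_finite (\<Psi>s \<omega>)) \<and>
     (\<forall>(n::nat) (k::nat) A B.
        disjoint_family_on A {..<n} \<and> disjoint_family_on B {..<k} \<and>
        (\<forall>i<n. A i \<in> sets mark_space \<and> emeasure \<mu>m (A i) < \<infinity>) \<and>
        (\<forall>j<k. B j \<in> sets mark_space \<and> emeasure \<mu>s (B j) < \<infinity>) \<longrightarrow>
          prob_space.indep_vars M (\<lambda>_. count_space (UNIV :: nat set))
            (\<lambda>i. case i of Inl j \<Rightarrow> cnt \<Psi>m (A j) | Inr j \<Rightarrow> cnt \<Psi>s (B j))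
            (Inl ` {..<n} \<union> Inr ` {..<k}) \<and>
          (\<forall>i<n. \<forall>c::nat. measure M {\<omega> \<in> space M. cnt \<Psi>m (A i) \<omega> = c} =
               measure \<mu>m (A i) ^ c / fact c * exp (- measure \<mu>m (A i))) \<and>
          (\<forall>j<k. \<forall>c::nat. measure M {\<omega> \<in> space M. cnt \<Psi>s (B j) \<omega> = c} =
               measure \<mu>s (B j) ^ c / fact c * exp (- measure \<mu>s (B j))))"

text \<open>Average (biased) received power from a BS at location x with LoS flag b, with
  transmit power (times bias) Pw.\<close>
definition rx_power :: "real \<Rightarrow> real \<Rightarrow> real \<Rightarrow> real \<Rightarrow> real \<Rightarrow> pt \<times> bool \<Rightarrow> real" where
  "rx_power Pw LL LNL aL aNL z =
     (if snd z then Pw * LL * norm (fst z) powr (- aL) else Pw * LNL * norm (fst z) powr (- aNL))"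

definition serving_event ::
  "'a measure \<Rightarrow> ('a \<Rightarrow> (pt \<times> bool) set) \<Rightarrow> (pt \<times> bool \<Rightarrow> real)
     \<Rightarrow> ('a \<Rightarrow> (pt \<times> bool) set) \<Rightarrow> (pt \<times> bool \<Rightarrow> real) \<Rightarrow> bool \<Rightarrow> 'a set" where
  "serving_event M \<Psi>own pown \<Psi>oth poth b =
     {\<omega> \<in> space M. \<exists>x. (x, b) \<in> \<Psi>own \<omega> \<and>
        (\<forall>y \<in> \<Psi>own \<omega>. y \<noteq> (x, b) \<longrightarrow> pown y < pown (x, b)) \<and>
        (\<forall>y \<in> \<Psi>oth \<omega>. poth y < pown (x, b))}"

definition zeta :: "real \<Rightarrow> (real \<Rightarrow> real) \<Rightarrow> real \<Rightarrow> real \<Rightarrow> real" where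
  "zeta lam pL x1 x2 =
     exp (- (LINT u:{0..x1}|lborel. lam * pL u * (2 * pi * u))
          - (LINT u:{0..x2}|lborel. lam * (1 - pL u) * (2 * pi * u)))"

end

theory Submission
  imports Defs
begin

text \<open>For an own-tier \<open>b\<close>-link at distance \<open>r\<close>, the points of both tiers that would receive at
  least as much power form a union of four discs whose radii are power laws in \<open>r\<close>; the typical user
  is served by an own-tier \<open>b\<close>-point at distance \<open>r\<close> exactly when that point is the only point in
  this region. For a partition of \<open>[0, T]\<close>, the events ``exactly one own-tier \<open>b\<close>-point in the
  annulus \<open>(s, t]\<close> and no other point in the region of \<open>t\<close>'' are disjoint and imply association,
  while association forces some annulus of the partition to be the first nonempty one; by the
  independence and Poisson property of the counts, their probabilities are lower and upper
  Riemann--Stieltjes sums for \<open>\<integral> \<lambda>(r) exp (- exposure r) dr\<close>, where the exposure is the mean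
  number of points in the region of \<open>r\<close>. Refining the partition and letting \<open>T \<rightarrow> \<infinity>\<close> gives the
  integral formula; \<open>exp (- exposure r)\<close> factors into the two \<open>\<zeta>\<close> functions.\<close>

section \<open>Radial integration in the plane\<close>

lemma emeasure_distr_norm_atMost:
  "emeasure (distr (lborel :: pt measure) borel norm) {..a} = ennreal (pi * (max 0 a)\<^sup>2)"
proof (cases "a < 0")
  case True
  then have "norm -` {..a} = ({} :: pt set)"
    by auto (meson norm_ge_zero order_trans not_le)
  then show ?thesis
    using True by (simp add: emeasure_distr)
next
  case False
  then have "norm -` {..a} = (cball 0 a :: pt set)"
    by auto
  then show ?thesis
    using False by (simp add: emeasure_distr emeasure_cball eval_unit_ball_vol)
qed

lemma emeasure_circumference_density_atMost:
  "emeasure (density lborel (\<lambda>u. indicator {0..} u * ennreal (2 * pi * u))) {..a} =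
     ennreal (pi * (max 0 a)\<^sup>2)"
proof -
  define m where "m = max 0 a"
  have "((\<lambda>u. 2 * pi * u) has_integral (pi * m\<^sup>2 - pi * 0\<^sup>2)) {0..m}"
    by (rule fundamental_theorem_of_calculus)
      (auto simp: m_def power2_eq_square intro!: derivative_eq_intros)
  then have FTC: "((\<lambda>u. 2 * pi * u) has_integral (pi * m\<^sup>2)) {0..m}"
    by simp
  have "emeasure (density lborel (\<lambda>u. indicator {0..} u * ennreal (2 * pi * u))) {..a} =
      (\<integral>\<^sup>+u. ennreal (indicator {0..m} u * (2 * pi * u)) \<partial>lborel)"
    by (auto simp: emeasure_density m_def indicator_def intro!: nn_integral_cong)
  also have "\<dots> = ennreal (pi * m\<^sup>2)"
  proof (rule nn_integral_has_integral_lborel)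
    have "(\<lambda>u. indicator {0..m} u * (2 * pi * u)) = (\<lambda>u. if u \<in> {0..m} then 2 * pi * u else 0)"
      by (auto simp: fun_eq_iff)
    then show "((\<lambda>u. indicator {0..m} u * (2 * pi * u)) has_integral (pi * m\<^sup>2)) UNIV"
      using FTC by (simp only: has_integral_restrict_UNIV)
  qed (auto simp: indicator_def m_def)
  finally show ?thesis
    by (simp add: m_def)
qed

lemma distr_norm_lborel_plane:
  "distr (lborel :: pt measure) borel norm = density lborel (\<lambda>u. indicator {0..} u * ennreal (2 * pi * u))"
proof (rule measure_eqI_generator_eq[where E = "range (\<lambda>a. {..a})" and \<Omega> = UNIV and A = "\<lambda>i. {..real i}"])
  show "sets (distr (lborel :: pt measure) borel norm) = sigma_sets UNIV (range (\<lambda>a. {..a::real}))"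
    "sets (density lborel (\<lambda>u. indicator {0..} u * ennreal (2 * pi * u))) =
       sigma_sets UNIV (range (\<lambda>a. {..a::real}))"
    by (simp_all add: borel_eq_atMost)
  show "(\<Union>i. {..real i}) = UNIV"
    using real_arch_simple by auto
  show "emeasure (distr (lborel :: pt measure) borel norm) {..real i} \<noteq> \<infinity>" for i
    by (simp add: emeasure_distr_norm_atMost)
qed (auto simp: Int_stable_def emeasure_distr_norm_atMost emeasure_circumference_density_atMost)

lemma nn_integral_radial_plane:
  assumes "g \<in> borel_measurable borel"
  shows "(\<integral>\<^sup>+x. g (norm x) \<partial>(lborel :: pt measure)) =
    (\<integral>\<^sup>+u. indicator {0..} u * ennreal (2 * pi * u) * g u \<partial>lborel)"
proof -
  have "(\<integral>\<^sup>+x. g (norm x) \<partial>(lborel :: pt measure)) = (\<integral>\<^sup>+u. g u \<partial>distr (lborel :: pt measure) borel norm)"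
    using assms by (simp add: nn_integral_distr)
  then show ?thesis
    using assms by (simp add: distr_norm_lborel_plane nn_integral_density)
qed

section \<open>The marked intensity measure\<close>

lemma space_mark_space [simp]: "space mark_space = UNIV"
  by (simp add: mark_space_def space_pair_measure)

lemma sets_marked_intensity [simp]: "sets (marked_intensity lam q) = sets mark_space"
  by (simp add: marked_intensity_def)

lemma emeasure_marked_intensity:
  assumes [measurable]: "q \<in> borel_measurable borel" and A: "A \<in> sets mark_space"
  shows "emeasure (marked_intensity lam q) A =
    (\<integral>\<^sup>+x. ennreal (lam * q (norm x)) * indicator A (x, True)
          + ennreal (lam * (1 - q (norm x))) * indicator A (x, False) \<partial>lborel)"
proof -
  define f where "f = (\<lambda>(x :: pt, b). ennreal (lam * (if b then q (norm x) else 1 - q (norm x))) * indicator A (x, b))"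
  have [measurable]: "f \<in> borel_measurable mark_space"
    using A unfolding f_def mark_space_def by measurable
  have "emeasure (marked_intensity lam q) A = (\<integral>\<^sup>+z. f z \<partial>mark_space)"
    using A unfolding marked_intensity_def f_def
    by (simp add: emeasure_density case_prod_beta' mark_space_def)
  also have "\<dots> = (\<integral>\<^sup>+x. \<integral>\<^sup>+b. f (x, b) \<partial>count_space UNIV \<partial>lborel)"
    unfolding mark_space_def
    by (rule sigma_finite_measure.nn_integral_fst[symmetric])
       (auto intro: sigma_finite_measure_count_space_finite simp: mark_space_def[symmetric])
  also have "\<dots> = (\<integral>\<^sup>+x. f (x, True) + f (x, False) \<partial>lborel)"
    by (intro nn_integral_cong) (simp add: nn_integral_count_space_finite UNIV_bool add.commute)
  finally show ?thesis
    by (simp add: f_def)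
qed

definition annulus :: "bool \<Rightarrow> real \<Rightarrow> real \<Rightarrow> (pt \<times> bool) set" where
  "annulus \<beta> a c = {z. snd z = \<beta> \<and> a < norm (fst z) \<and> norm (fst z) \<le> c}"

lemma annulus_in_mark_space: "annulus \<beta> a c \<in> sets mark_space"
proof -
  have "Measurable.pred mark_space (\<lambda>z. snd z = \<beta> \<and> a < norm (fst z) \<and> norm (fst z) \<le> c)"
    unfolding mark_space_def by measurable
  then show ?thesis
    unfolding annulus_def pred_def by simp
qed

lemma disc_in_mark_space: "{z :: pt \<times> bool. norm (fst z) \<le> c} \<in> sets mark_space"
proof -
  have "Measurable.pred mark_space (\<lambda>z :: pt \<times> bool. norm (fst z) \<le> c)"
    unfolding mark_space_def by measurable
  then show ?thesis
    unfolding pred_def by simp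
qed

lemma singleton_in_mark_space: "{z} \<in> sets mark_space"
proof -
  have "{z} = {fst z} \<times> {snd z}"
    by auto
  also have "\<dots> \<in> sets mark_space"
    unfolding mark_space_def by (intro pair_measureI) auto
  finally show ?thesis .
qed

lemma annulus_empty: "c \<le> a \<Longrightarrow> annulus \<beta> a c = {}"
  by (auto simp: annulus_def)

lemma annulus_bounded: "annulus \<beta> a c \<subseteq> {z. norm (fst z) \<le> c}"
  by (auto simp: annulus_def)

definition radial_intensity :: "real \<Rightarrow> (real \<Rightarrow> real) \<Rightarrow> bool \<Rightarrow> real \<Rightarrow> real" where
  "radial_intensity lam q \<beta> u = lam * (if \<beta> then q u else 1 - q u) * (2 * pi * u)"

definition radial_mass :: "real \<Rightarrow> (real \<Rightarrow> real) \<Rightarrow> bool \<Rightarrow> real \<Rightarrow> real" where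
  "radial_mass lam q \<beta> x = (LINT u:{0..x}|lborel. radial_intensity lam q \<beta> u)"

lemma zeta_eq_radial_mass:
  "zeta lam q x1 x2 = exp (- radial_mass lam q True x1 - radial_mass lam q False x2)"
  by (simp add: zeta_def radial_mass_def radial_intensity_def)

lemma set_integral_singleton_Icc:
  fixes f :: "real \<Rightarrow> real"
  shows "(LINT u:{a..a}|lborel. f u) = 0"
proof -
  have "(\<lambda>u. indicator {a..a} u *\<^sub>R f u) = (\<lambda>u. f a * indicator {a} u)"
    by (auto simp: fun_eq_iff split: split_indicator)
  then show ?thesis
    by (simp add: set_lebesgue_integral_def)
qed

lemma radial_mass_zero [simp]: "radial_mass lam q \<beta> 0 = 0"
  unfolding radial_mass_def by (rule set_integral_singleton_Icc)

lemma set_integrable_Icc_bounded: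
  fixes f :: "real \<Rightarrow> real"
  assumes "f \<in> borel_measurable borel" and "\<And>u. a \<le> u \<Longrightarrow> u \<le> c \<Longrightarrow> \<bar>f u\<bar> \<le> B"
  shows "set_integrable lborel {a..c} f"
  unfolding set_integrable_def
proof (rule integrableI_bounded_set_indicator[where B = B])
  show "emeasure lborel {a..c} < \<infinity>"
    by (cases "a \<le> c") auto
qed (use assms in \<open>auto intro!: AE_I2\<close>)

lemma set_integral_Ioc_eq_diff:
  fixes f :: "real \<Rightarrow> real"
  assumes "set_integrable lborel {0..c} f" and "0 \<le> a" "a \<le> c"
  shows "(LINT u:{a<..c}|lborel. f u) = (LINT u:{0..c}|lborel. f u) - (LINT u:{0..a}|lborel. f u)"
proof -
  have "{0..c} = {0..a} \<union> {a<..c}" "{0..a} \<inter> {a<..c} = {}"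
    using assms by auto
  moreover have "set_integrable lborel {0..a} f" "set_integrable lborel {a<..c} f"
    using assms by (auto intro: set_integrable_subset)
  ultimately show ?thesis
    by (simp add: set_integral_Un)
qed

locale marked_tier =
  fixes lam :: real and q :: "real \<Rightarrow> real"
  assumes lam_nonneg: "0 \<le> lam" and q_measurable [measurable]: "q \<in> borel_measurable borel"
    and q_range: "\<And>r. 0 \<le> r \<Longrightarrow> 0 \<le> q r \<and> q r \<le> 1"
begin

abbreviation "\<mu> \<equiv> marked_intensity lam q"

lemma radial_intensity_measurable [measurable]: "radial_intensity lam q \<beta> \<in> borel_measurable borel"
  unfolding radial_intensity_def by measurable

lemma radial_intensity_bounds:
  assumes "0 \<le> u"
  shows "0 \<le> radial_intensity lam q \<beta> u" and "radial_intensity lam q \<beta> u \<le> 2 * pi * lam * u"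
proof -
  have q: "0 \<le> (if \<beta> then q u else 1 - q u)" "(if \<beta> then q u else 1 - q u) \<le> 1"
    using q_range[OF assms] by auto
  have "(if \<beta> then q u else 1 - q u) * (2 * pi * u) \<le> 1 * (2 * pi * u)"
    using q assms by (intro mult_right_mono) auto
  then have "lam * ((if \<beta> then q u else 1 - q u) * (2 * pi * u)) \<le> lam * (2 * pi * u)"
    using lam_nonneg by (intro mult_left_mono) auto
  then show "radial_intensity lam q \<beta> u \<le> 2 * pi * lam * u"
    unfolding radial_intensity_def by (simp only: ac_simps)
  show "0 \<le> radial_intensity lam q \<beta> u"
    unfolding radial_intensity_def using q assms lam_nonneg by (intro mult_nonneg_nonneg) auto
qed

lemma set_integrable_radial_intensity:
  assumes "0 \<le> a"
  shows "set_integrable lborel {a..c} (radial_intensity lam q \<beta>)"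
proof (rule set_integrable_Icc_bounded[where B = "2 * pi * lam * \<bar>c\<bar>"])
  fix u assume u: "a \<le> u" "u \<le> c"
  then have "0 \<le> u"
    using assms by simp
  then have "\<bar>radial_intensity lam q \<beta> u\<bar> = radial_intensity lam q \<beta> u"
    using radial_intensity_bounds(1) by simp
  also have "\<dots> \<le> 2 * pi * lam * u"
    using \<open>0 \<le> u\<close> by (rule radial_intensity_bounds(2))
  also have "\<dots> \<le> 2 * pi * lam * \<bar>c\<bar>"
    using u lam_nonneg by (intro mult_left_mono) auto
  finally show "\<bar>radial_intensity lam q \<beta> u\<bar> \<le> 2 * pi * lam * \<bar>c\<bar>" .
qed simp

lemma emeasure_annulus:
  assumes "0 \<le> a"
  shows "emeasure \<mu> (annulus \<beta> a c) =
    (\<integral>\<^sup>+u. ennreal (indicator {a<..c} u * radial_intensity lam q \<beta> u) \<partial>lborel)"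
proof -
  define g where "g u = indicator {a<..c} u * ennreal (lam * (if \<beta> then q u else 1 - q u))" for u
  have [measurable]: "g \<in> borel_measurable borel"
    unfolding g_def by measurable
  have "emeasure \<mu> (annulus \<beta> a c) = (\<integral>\<^sup>+x. g (norm (x :: pt)) \<partial>lborel)"
    unfolding emeasure_marked_intensity[OF q_measurable annulus_in_mark_space]
    by (intro nn_integral_cong) (auto simp: g_def annulus_def indicator_def)
  also have "\<dots> = (\<integral>\<^sup>+u. indicator {0..} u * ennreal (2 * pi * u) * g u \<partial>lborel)"
    by (simp add: nn_integral_radial_plane)
  also have "\<dots> = (\<integral>\<^sup>+u. ennreal (indicator {a<..c} u * radial_intensity lam q \<beta> u) \<partial>lborel)"
  proof (intro nn_integral_cong)
    fix u :: real
    show "indicator {0..} u * ennreal (2 * pi * u) * g u =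
        ennreal (indicator {a<..c} u * radial_intensity lam q \<beta> u)"
      using assms by (cases "u \<in> {a<..c}")
        (auto simp: g_def radial_intensity_def ennreal_mult''[symmetric] mult_ac)
  qed
  finally show ?thesis .
qed

lemma measure_annulus:
  assumes "0 \<le> a"
  shows "emeasure \<mu> (annulus \<beta> a c) < \<infinity>"
  and "a \<le> c \<Longrightarrow> measure \<mu> (annulus \<beta> a c) = radial_mass lam q \<beta> c - radial_mass lam q \<beta> a"
proof -
  have int: "set_integrable lborel {a<..c} (radial_intensity lam q \<beta>)"
    using set_integrable_radial_intensity[OF assms] by (rule set_integrable_subset) auto
  have nonneg: "AE u in lborel. 0 \<le> indicator {a<..c} u * radial_intensity lam q \<beta> u"
    using assms radial_intensity_bounds by (auto simp: indicator_def intro!: AE_I2)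
  have eq: "emeasure \<mu> (annulus \<beta> a c) = ennreal (LINT u:{a<..c}|lborel. radial_intensity lam q \<beta> u)"
    using int nonneg unfolding emeasure_annulus[OF assms] set_lebesgue_integral_def set_integrable_def
    by (simp add: nn_integral_eq_integral)
  then show "emeasure \<mu> (annulus \<beta> a c) < \<infinity>"
    by simp
  assume "a \<le> c"
  have "0 \<le> (LINT u:{a<..c}|lborel. radial_intensity lam q \<beta> u)"
    using nonneg unfolding set_lebesgue_integral_def by (simp add: integral_nonneg_AE)
  with eq have "measure \<mu> (annulus \<beta> a c) = (LINT u:{a<..c}|lborel. radial_intensity lam q \<beta> u)"
    by (simp add: measure_def)
  also have "\<dots> = radial_mass lam q \<beta> c - radial_mass lam q \<beta> a"
    unfolding radial_mass_def using assms \<open>a \<le> c\<close>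
    by (intro set_integral_Ioc_eq_diff set_integrable_radial_intensity) auto
  finally show "measure \<mu> (annulus \<beta> a c) = radial_mass lam q \<beta> c - radial_mass lam q \<beta> a" .
qed

lemma radial_mass_nonneg: "0 \<le> radial_mass lam q \<beta> x"
  unfolding radial_mass_def set_lebesgue_integral_def
  by (rule integral_nonneg_AE) (auto simp: indicator_def intro!: AE_I2 radial_intensity_bounds)

lemma radial_mass_mono: "0 \<le> x \<Longrightarrow> x \<le> y \<Longrightarrow> radial_mass lam q \<beta> x \<le> radial_mass lam q \<beta> y"
  using measure_annulus(2)[of x y \<beta>] measure_nonneg[of \<mu> "annulus \<beta> x y"] by simp

lemma radial_mass_LoS_plus_NLoS:
  assumes "0 \<le> m"
  shows "radial_mass lam q True m + radial_mass lam q False m = pi * lam * m\<^sup>2"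
proof -
  have "((\<lambda>u. 2 * pi * lam * u) has_integral (pi * lam * m\<^sup>2 - pi * lam * 0\<^sup>2)) {0..m}"
    using assms by (intro fundamental_theorem_of_calculus)
      (auto simp: power2_eq_square intro!: derivative_eq_intros)
  then have FTC: "((\<lambda>u. 2 * pi * lam * u) has_integral (pi * lam * m\<^sup>2)) {0..m}"
    by simp
  have "radial_mass lam q True m + radial_mass lam q False m =
      (LINT u:{0..m}|lborel. radial_intensity lam q True u + radial_intensity lam q False u)"
    unfolding radial_mass_def
    by (intro set_integral_add(2)[symmetric] set_integrable_radial_intensity) simp_all
  also have "\<dots> = (LINT u:{0..m}|lborel. 2 * pi * lam * u)"
    by (rule set_lebesgue_integral_cong) (auto simp: radial_intensity_def algebra_simps)
  also have "\<dots> = integral {0..m} (\<lambda>u. 2 * pi * lam * u)"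
  proof (rule set_borel_integral_eq_integral)
    show "set_integrable lborel {0..m} (\<lambda>u. 2 * pi * lam * u)"
      using assms lam_nonneg
      by (intro set_integrable_Icc_bounded[where B = "2 * pi * lam * m"]) (auto intro!: mult_left_mono)
  qed
  also have "\<dots> = pi * lam * m\<^sup>2"
    using FTC by (rule integral_unique)
  finally show ?thesis .
qed

lemma emeasure_disc_finite: "emeasure \<mu> {z :: pt \<times> bool. norm (fst z) \<le> c} < \<infinity>"
proof -
  let ?D = "{z :: pt \<times> bool. norm (fst z) \<le> c}"
  note D = disc_in_mark_space[of c]
  have "emeasure \<mu> ?D \<le> (\<integral>\<^sup>+x. ennreal (2 * lam) * indicator (cball (0 :: pt) c) x \<partial>lborel)"
    unfolding emeasure_marked_intensity[OF q_measurable D]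
  proof (intro nn_integral_mono)
    fix x :: pt
    have "0 \<le> lam * q (norm x)" "0 \<le> lam * (1 - q (norm x))"
      using q_range[of "norm x"] lam_nonneg by auto
    then have "ennreal (lam * q (norm x)) + ennreal (lam * (1 - q (norm x))) = ennreal lam"
      by (simp add: ennreal_plus[symmetric] algebra_simps del: ennreal_plus)
    also have "\<dots> \<le> ennreal (2 * lam)"
      using lam_nonneg by (intro ennreal_leI) simp
    finally have "ennreal (lam * q (norm x)) + ennreal (lam * (1 - q (norm x))) \<le> ennreal (2 * lam)" .
    then show "ennreal (lam * q (norm x)) * indicator ?D (x, True)
        + ennreal (lam * (1 - q (norm x))) * indicator ?D (x, False)
        \<le> ennreal (2 * lam) * indicator (cball 0 c) x"
      by (simp add: indicator_def dist_norm)
  qed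
  also have "\<dots> = ennreal (2 * lam) * emeasure lborel (cball (0 :: pt) c)"
    by (rule nn_integral_cmult_indicator) simp
  also have "\<dots> < \<infinity>"
    using emeasure_compact_finite[OF compact_cball[of "0 :: pt" c]] by (simp add: ennreal_mult_less_top)
  finally show ?thesis .
qed

lemma emeasure_bounded_finite:
  assumes "A \<in> sets mark_space" "A \<subseteq> {z. norm (fst z) \<le> c}"
  shows "emeasure \<mu> A < \<infinity>"
proof -
  have "{z :: pt \<times> bool. norm (fst z) \<le> c} \<in> sets \<mu>"
    using disc_in_mark_space by simp
  with assms(2) have "emeasure \<mu> A \<le> emeasure \<mu> {z. norm (fst z) \<le> c}"
    by (rule emeasure_mono)
  then show ?thesis
    using emeasure_disc_finite[of c] by (rule le_less_trans)
qed

lemma measure_annuli: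
  assumes "0 \<le> x" "0 \<le> y"
  shows "measure \<mu> (annulus True 0 x \<union> annulus False 0 y) = radial_mass lam q True x + radial_mass lam q False y"
proof -
  have "annulus True 0 x \<inter> annulus False 0 y = {}"
    by (auto simp: annulus_def)
  moreover have "emeasure \<mu> (annulus \<beta> 0 c) \<noteq> \<infinity>" for \<beta> c
    using measure_annulus(1)[of 0 \<beta> c] by simp
  ultimately have "measure \<mu> (annulus True 0 x \<union> annulus False 0 y) =
      measure \<mu> (annulus True 0 x) + measure \<mu> (annulus False 0 y)"
    by (intro measure_Union) (simp_all add: annulus_in_mark_space)
  then show ?thesis
    using assms by (simp add: measure_annulus(2))
qed

end

section \<open>Counts of two independent marked Poisson processes\<close>

lemma (in prob_space) indep_sets_reindex:
  assumes inj: "inj_on h I" and indep: "indep_sets F (h ` I)"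
  shows "indep_sets (\<lambda>i. F (h i)) I"
proof (rule indep_setsI)
  show "F (h i) \<subseteq> events" if "i \<in> I" for i
    using indep that by (auto simp: indep_sets_def)
  fix A J assume J: "J \<noteq> {}" "J \<subseteq> I" "finite J" and A: "\<forall>j\<in>J. A j \<in> F (h j)"
  have injJ: "inj_on h J"
    using inj J(2) by (rule inj_on_subset)
  define A' where "A' = A \<circ> the_inv_into J h"
  have A': "A' (h j) = A j" if "j \<in> J" for j
    using injJ that by (simp add: A'_def the_inv_into_f_f)
  have "prob (\<Inter>j\<in>h ` J. A' j) = (\<Prod>j\<in>h ` J. prob (A' j))"
    using indep J A by (intro indep_setsD) (auto simp: A')
  moreover have "(\<Inter>j\<in>h ` J. A' j) = (\<Inter>j\<in>J. A j)"
    using A' by auto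
  moreover have "(\<Prod>j\<in>h ` J. prob (A' j)) = (\<Prod>j\<in>J. prob (A j))"
    using injJ by (simp add: prod.reindex A')
  ultimately show "prob (\<Inter>j\<in>J. A j) = (\<Prod>j\<in>J. prob (A j))"
    by simp
qed

lemma (in prob_space) indep_vars_reindex:
  assumes "inj_on h I" and "indep_vars M' X (h ` I)"
  shows "indep_vars (\<lambda>i. M' (h i)) (\<lambda>i. X (h i)) I"
  using assms indep_sets_reindex[OF assms(1)] unfolding indep_vars_def by auto

lemma (in prob_space) indep_vars_case_sum_swap:
  assumes "indep_vars (\<lambda>_. N) (\<lambda>i. case i of Inl j \<Rightarrow> X j | Inr j \<Rightarrow> Y j) (Inl ` I \<union> Inr ` J)"
  shows "indep_vars (\<lambda>_. N) (\<lambda>i. case i of Inl j \<Rightarrow> Y j | Inr j \<Rightarrow> X j) (Inl ` J \<union> Inr ` I)"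
proof -
  let ?swap = "case_sum Inr Inl"
  have "Inl ` I \<union> Inr ` J = ?swap ` (Inl ` J \<union> Inr ` I)"
    by (auto simp: image_Un image_image)
  moreover have "inj_on ?swap (Inl ` J \<union> Inr ` I)"
    by (auto simp: inj_on_def split: sum.splits)
  ultimately have "indep_vars (\<lambda>_. N) (\<lambda>i. case ?swap i of Inl j \<Rightarrow> X j | Inr j \<Rightarrow> Y j) (Inl ` J \<union> Inr ` I)"
    using assms indep_vars_reindex[where M' = "\<lambda>_. N"] by simp
  moreover have "(\<lambda>i. case ?swap i of Inl j \<Rightarrow> X j | Inr j \<Rightarrow> Y j) = (\<lambda>i. case i of Inl j \<Rightarrow> Y j | Inr j \<Rightarrow> X j)"
    by (auto simp: fun_eq_iff split: sum.split)
  ultimately show ?thesis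
    by simp
qed

lemma two_tier_marked_ppp_counts:
  fixes n k :: nat
  assumes "two_tier_marked_ppp M \<Psi>m \<mu>m \<Psi>s \<mu>s"
    and "disjoint_family_on A {..<n}" "disjoint_family_on B {..<k}"
    and "\<forall>i<n. A i \<in> sets mark_space \<and> emeasure \<mu>m (A i) < \<infinity>"
    and "\<forall>j<k. B j \<in> sets mark_space \<and> emeasure \<mu>s (B j) < \<infinity>"
  shows "prob_space.indep_vars M (\<lambda>_. count_space UNIV)
        (\<lambda>i. case i of Inl j \<Rightarrow> cnt \<Psi>m (A j) | Inr j \<Rightarrow> cnt \<Psi>s (B j)) (Inl ` {..<n} \<union> Inr ` {..<k})"
    and "\<forall>i<n. \<forall>c::nat. measure M {\<omega> \<in> space M. cnt \<Psi>m (A i) \<omega> = c} =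
        measure \<mu>m (A i) ^ c / fact c * exp (- measure \<mu>m (A i))"
    and "\<forall>j<k. \<forall>c::nat. measure M {\<omega> \<in> space M. cnt \<Psi>s (B j) \<omega> = c} =
        measure \<mu>s (B j) ^ c / fact c * exp (- measure \<mu>s (B j))"
proof -
  have "disjoint_family_on A {..<n} \<and> disjoint_family_on B {..<k} \<and>
      (\<forall>i<n. A i \<in> sets mark_space \<and> emeasure \<mu>m (A i) < \<infinity>) \<and>
      (\<forall>j<k. B j \<in> sets mark_space \<and> emeasure \<mu>s (B j) < \<infinity>)"
    using assms(2-5) by blast
  with assms(1)[unfolded two_tier_marked_ppp_def, THEN conjunct2, THEN conjunct2,
      THEN spec[of _ n], THEN spec[of _ k], THEN spec[of _ A], THEN spec[of _ B]]
  show "prob_space.indep_vars M (\<lambda>_. count_space UNIV)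
        (\<lambda>i. case i of Inl j \<Rightarrow> cnt \<Psi>m (A j) | Inr j \<Rightarrow> cnt \<Psi>s (B j)) (Inl ` {..<n} \<union> Inr ` {..<k})"
    and "\<forall>i<n. \<forall>c::nat. measure M {\<omega> \<in> space M. cnt \<Psi>m (A i) \<omega> = c} =
        measure \<mu>m (A i) ^ c / fact c * exp (- measure \<mu>m (A i))"
    and "\<forall>j<k. \<forall>c::nat. measure M {\<omega> \<in> space M. cnt \<Psi>s (B j) \<omega> = c} =
        measure \<mu>s (B j) ^ c / fact c * exp (- measure \<mu>s (B j))"
    by simp_all
qed

lemma two_tier_marked_ppp_swap:
  assumes ppp: "two_tier_marked_ppp M \<Psi>m \<mu>m \<Psi>s \<mu>s"
  shows "two_tier_marked_ppp M \<Psi>s \<mu>s \<Psi>m \<mu>m"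
proof -
  interpret prob_space M
    using ppp by (simp add: two_tier_marked_ppp_def)
  have swapped: "indep_vars (\<lambda>_. count_space UNIV)
        (\<lambda>i. case i of Inl j \<Rightarrow> cnt \<Psi>s (A j) | Inr j \<Rightarrow> cnt \<Psi>m (B j)) (Inl ` {..<n} \<union> Inr ` {..<k}) \<and>
      (\<forall>i<n. \<forall>c::nat. measure M {\<omega> \<in> space M. cnt \<Psi>s (A i) \<omega> = c} =
         measure \<mu>s (A i) ^ c / fact c * exp (- measure \<mu>s (A i))) \<and>
      (\<forall>j<k. \<forall>c::nat. measure M {\<omega> \<in> space M. cnt \<Psi>m (B j) \<omega> = c} =
         measure \<mu>m (B j) ^ c / fact c * exp (- measure \<mu>m (B j)))"
    if "disjoint_family_on A {..<n} \<and> disjoint_family_on B {..<k} \<and>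
      (\<forall>i<n. A i \<in> sets mark_space \<and> emeasure \<mu>s (A i) < \<infinity>) \<and>
      (\<forall>j<k. B j \<in> sets mark_space \<and> emeasure \<mu>m (B j) < \<infinity>)"
    for n k :: nat and A B
  proof -
    have hyps: "disjoint_family_on B {..<k}" "disjoint_family_on A {..<n}"
        "\<forall>j<k. B j \<in> sets mark_space \<and> emeasure \<mu>m (B j) < \<infinity>"
        "\<forall>i<n. A i \<in> sets mark_space \<and> emeasure \<mu>s (A i) < \<infinity>"
      using that by auto
    note counts = two_tier_marked_ppp_counts[OF ppp hyps]
    show ?thesis
      using indep_vars_case_sum_swap[OF counts(1)] counts(2,3) by simp
  qed
  have lf: "\<forall>\<omega>\<in>space M. locally_finite (\<Psi>s \<omega>) \<and> locally_finite (\<Psi>m \<omega>)"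
    using ppp by (simp add: two_tier_marked_ppp_def)
  show ?thesis
    unfolding two_tier_marked_ppp_def
    by (intro conjI[OF prob_space_axioms] conjI[OF lf] allI impI) (erule swapped)
qed

lemma count_event_measurable:
  assumes ppp: "two_tier_marked_ppp M \<Psi>m \<mu>m \<Psi>s \<mu>s"
    and A: "A \<in> sets mark_space" "emeasure \<mu>m A < \<infinity>"
  shows "{\<omega> \<in> space M. cnt \<Psi>m A \<omega> = c} \<in> sets M"
proof -
  interpret prob_space M
    using ppp by (simp add: two_tier_marked_ppp_def)
  have "random_variable (count_space UNIV) (cnt \<Psi>m A)"
    using two_tier_marked_ppp_counts(1)[OF ppp, of "\<lambda>_. A" 1 "\<lambda>_. {}" 0] A
    unfolding indep_vars_def by (auto simp: disjoint_family_on_def)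
  then show ?thesis
    by measurable
qed

lemma prob_count_poisson:
  assumes ppp: "two_tier_marked_ppp M \<Psi>m \<mu>m \<Psi>s \<mu>s"
    and A: "A \<in> sets mark_space" "emeasure \<mu>m A < \<infinity>"
  shows "measure M {\<omega> \<in> space M. cnt \<Psi>m A \<omega> = c} = measure \<mu>m A ^ c / fact c * exp (- measure \<mu>m A)"
  using two_tier_marked_ppp_counts(2)[OF ppp, of "\<lambda>_. A" 1 "\<lambda>_. {}" 0] A
  by (simp add: disjoint_family_on_def)

lemma prob_counts_product:
  assumes ppp: "two_tier_marked_ppp M \<Psi>m \<mu>m \<Psi>s \<mu>s" and disj: "A \<inter> A' = {}"
    and A: "A \<in> sets mark_space" "emeasure \<mu>m A < \<infinity>"
    and A': "A' \<in> sets mark_space" "emeasure \<mu>m A' < \<infinity>"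
    and B: "B \<in> sets mark_space" "emeasure \<mu>s B < \<infinity>"
  shows "measure M {\<omega> \<in> space M. cnt \<Psi>m A \<omega> = c \<and> cnt \<Psi>m A' \<omega> = c' \<and> cnt \<Psi>s B \<omega> = d} =
    measure M {\<omega> \<in> space M. cnt \<Psi>m A \<omega> = c} * measure M {\<omega> \<in> space M. cnt \<Psi>m A' \<omega> = c'} *
    measure M {\<omega> \<in> space M. cnt \<Psi>s B \<omega> = d}"
proof -
  interpret prob_space M
    using ppp by (simp add: two_tier_marked_ppp_def)
  define As where "As i = (if i = 0 then A else A')" for i :: nat
  define X where "X i = (case i of Inl j \<Rightarrow> cnt \<Psi>m (As j) | Inr (j :: nat) \<Rightarrow> cnt \<Psi>s ((\<lambda>_. B) j))" for i
  define S where "S i = (if i = Inl 0 then {c} else if i = Inl 1 then {c'} else {d})" for i :: "nat + nat"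
  define J where "J = (Inl ` {..<2} \<union> Inr ` {..<1} :: (nat + nat) set)"
  have J: "J = {Inl 0, Inl 1, Inr 0}"
    by (auto simp: J_def)
  have "disjoint_family_on As {..<2}"
    using disj by (auto simp: disjoint_family_on_def As_def)
  moreover have "\<forall>i<2. As i \<in> sets mark_space \<and> emeasure \<mu>m (As i) < \<infinity>"
    using A A' by (simp add: As_def)
  ultimately have "indep_vars (\<lambda>_. count_space UNIV) X J"
    using two_tier_marked_ppp_counts(1)[OF ppp, of As 2 "\<lambda>_. B" 1] B
    unfolding X_def J_def by (auto simp: disjoint_family_on_def)
  then have "prob (\<Inter>i\<in>J. X i -` S i \<inter> space M) = (\<Prod>i\<in>J. prob (X i -` S i \<inter> space M))"
    by (rule indep_varsD_finite) (auto simp: J)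
  moreover have "(\<Inter>i\<in>J. X i -` S i \<inter> space M) =
      {\<omega> \<in> space M. cnt \<Psi>m A \<omega> = c \<and> cnt \<Psi>m A' \<omega> = c' \<and> cnt \<Psi>s B \<omega> = d}"
    by (auto simp: J X_def S_def As_def)
  moreover have "f -` {a} \<inter> space M = {\<omega> \<in> space M. f \<omega> = a}" for f :: "'a \<Rightarrow> nat" and a
    by auto
  ultimately show ?thesis
    by (simp add: J X_def S_def As_def mult.assoc)
qed

lemma prob_counts_two_tiers:
  assumes ppp: "two_tier_marked_ppp M \<Psi>m \<mu>m \<Psi>s \<mu>s" and disj: "A \<inter> A' = {}"
    and A: "A \<in> sets mark_space" "emeasure \<mu>m A < \<infinity>"
    and A': "A' \<in> sets mark_space" "emeasure \<mu>m A' < \<infinity>"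
    and B: "B \<in> sets mark_space" "emeasure \<mu>s B < \<infinity>"
  shows "measure M {\<omega> \<in> space M. cnt \<Psi>m A \<omega> = c \<and> cnt \<Psi>m A' \<omega> = 0 \<and> cnt \<Psi>s B \<omega> = 0} =
    measure \<mu>m A ^ c / fact c * exp (- (measure \<mu>m A + measure \<mu>m A' + measure \<mu>s B))"
  unfolding prob_counts_product[OF assms] prob_count_poisson[OF ppp A] prob_count_poisson[OF ppp A']
    prob_count_poisson[OF two_tier_marked_ppp_swap[OF ppp] B] minus_add_distrib exp_add
  by simp

section \<open>Equal-power radii\<close>

text \<open>\<open>power_radius c a c0 a0 r\<close> is the distance \<open>u\<close> at which \<open>c * u powr (- a) = c0 * r powr (- a0)\<close>.\<close>

definition power_radius :: "real \<Rightarrow> real \<Rightarrow> real \<Rightarrow> real \<Rightarrow> real \<Rightarrow> real" where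
  "power_radius c a c0 a0 r = (c / c0) powr (1 / a) * r powr (a0 / a)"

lemma powr_less_powr_iff_base:
  fixes x y e :: real
  assumes "0 < x" "0 < y" "0 < e"
  shows "x powr e < y powr e \<longleftrightarrow> x < y"
proof
  assume "x < y"
  then show "x powr e < y powr e"
    using assms by (intro powr_less_mono2) auto
next
  assume less: "x powr e < y powr e"
  show "x < y"
  proof (rule ccontr)
    assume "\<not> x < y"
    then have "y powr e \<le> x powr e"
      using assms by (intro powr_mono2) auto
    with less show False
      by simp
  qed
qed

lemma power_less_iff_power_radius_less:
  assumes "0 < c" "0 < c0" "0 < a" "0 < a0" and "0 < u" "0 < r"
  shows "c * u powr (- a) < c0 * r powr (- a0) \<longleftrightarrow> power_radius c a c0 a0 r < u"
proof -
  have "c * u powr (- a) < c0 * r powr (- a0) \<longleftrightarrow> (c / c0) * r powr a0 < u powr a"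
    using assms by (simp add: powr_minus field_simps)
  also have "\<dots> \<longleftrightarrow> ((c / c0) * r powr a0) powr (1 / a) < (u powr a) powr (1 / a)"
    using assms by (simp add: powr_less_powr_iff_base)
  also have "((c / c0) * r powr a0) powr (1 / a) = power_radius c a c0 a0 r"
    unfolding power_radius_def by (simp only: powr_mult powr_powr) simp
  also have "(u powr a) powr (1 / a) = u"
    using assms by (simp add: powr_powr)
  finally show ?thesis .
qed

lemma power_radius_nonneg: "0 \<le> power_radius c a c0 a0 r"
  by (simp add: power_radius_def)

lemma power_radius_zero: "0 < a0 \<Longrightarrow> 0 < a \<Longrightarrow> power_radius c a c0 a0 0 = 0"
  by (simp add: power_radius_def)

lemma power_radius_self: "0 < c \<Longrightarrow> 0 < a \<Longrightarrow> 0 \<le> r \<Longrightarrow> power_radius c a c a r = r"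
  by (simp add: power_radius_def)

lemma power_radius_mono:
  "0 < a \<Longrightarrow> 0 < a0 \<Longrightarrow> 0 \<le> r \<Longrightarrow> r \<le> r' \<Longrightarrow> power_radius c a c0 a0 r \<le> power_radius c a c0 a0 r'"
  unfolding power_radius_def by (intro mult_left_mono powr_mono2) auto

lemma filterlim_power_radius_at_top:
  assumes "0 < c" "0 < c0" "0 < a" "0 < a0"
  shows "filterlim (power_radius c a c0 a0) at_top at_top"
proof -
  have lim: "filterlim (\<lambda>r. exp (a0 / a * ln r)) at_top at_top"
    using assms by (intro filterlim_compose[OF exp_at_top] filterlim_tendsto_pos_mult_at_top[OF tendsto_const])
      (simp_all add: ln_at_top)
  have ev: "eventually (\<lambda>r. r powr (a0 / a) = exp (a0 / a * ln r)) at_top"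
    using eventually_gt_at_top[of 0] by eventually_elim (simp add: powr_def)
  have "filterlim (\<lambda>r. r powr (a0 / a)) at_top at_top"
    using lim filterlim_cong[OF refl refl ev] by simp
  then show ?thesis
    unfolding power_radius_def using assms
    by (intro filterlim_tendsto_pos_mult_at_top[OF tendsto_const]) simp_all
qed

lemma power_law_crossing_rational:
  fixes c a r q :: real
  assumes "0 < c" "0 < a" "0 < r" "0 < q" "q < c * r powr (- a)"
  shows "\<exists>t\<in>\<rat>. r < t \<and> q < c * t powr (- a)"
proof -
  define \<tau> where "\<tau> = (c / q) powr (1 / a)"
  have "\<tau> powr (- a) = (c / q) powr (-1)"
    using assms by (simp add: \<tau>_def powr_powr)
  then have "c * \<tau> powr (- a) = q"
    using assms by (simp add: powr_minus_divide)
  then have "r < \<tau>"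
    using assms power_less_iff_power_radius_less[of c c a a \<tau> r] by (simp add: power_radius_self \<tau>_def)
  then obtain t where t: "t \<in> \<rat>" "r < t" "t < \<tau>"
    using Rats_dense_in_real by blast
  then have "c * \<tau> powr (- a) < c * t powr (- a)"
    using assms power_less_iff_power_radius_less[of c c a a \<tau> t] by (simp add: power_radius_self)
  then show ?thesis
    using t \<open>c * \<tau> powr (- a) = q\<close> by auto
qed

section \<open>Bracketing an integral by Riemann--Stieltjes sums\<close>

definition grid_point :: "real \<Rightarrow> nat \<Rightarrow> nat \<Rightarrow> real" where
  "grid_point T n j = real j * T / real n"

lemma grid_point_nonneg: "0 \<le> T \<Longrightarrow> 0 \<le> grid_point T n j"
  by (simp add: grid_point_def)

lemma grid_point_mono: "0 \<le> T \<Longrightarrow> j \<le> k \<Longrightarrow> grid_point T n j \<le> grid_point T n k"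
  by (simp add: grid_point_def divide_right_mono mult_right_mono)

lemma grid_point_strict_mono: "0 < T \<Longrightarrow> 0 < n \<Longrightarrow> j < k \<Longrightarrow> grid_point T n j < grid_point T n k"
  by (simp add: grid_point_def divide_strict_right_mono)

lemma grid_point_step: "grid_point T n (Suc j) - grid_point T n j = T / real n"
  by (simp add: grid_point_def add_divide_distrib algebra_simps)

lemma grid_point_ends: "grid_point T n 0 = 0" "0 < n \<Longrightarrow> grid_point T n n = T"
  by (simp_all add: grid_point_def)

lemma grid_point_le_end: "0 \<le> T \<Longrightarrow> j \<le> n \<Longrightarrow> 0 < n \<Longrightarrow> grid_point T n j \<le> T"
  using grid_point_mono[of T j n n] by (simp add: grid_point_ends)

lemma grid_interval_exists:
  assumes "0 < T" "0 < n" "0 < r" "r \<le> T"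
  shows "\<exists>j<n. grid_point T n j < r \<and> r \<le> grid_point T n (Suc j)"
proof -
  define k where "k = nat \<lceil>r * real n / T\<rceil>"
  have "0 < r * real n / T" "r * real n / T \<le> real n"
    using assms by (simp_all add: field_simps)
  then have k: "1 \<le> k" "k \<le> n" "real k - 1 < r * real n / T" "r * real n / T \<le> real k"
    unfolding k_def by (linarith, simp add: nat_le_iff ceiling_le_iff, linarith+)
  then have "grid_point T n (k - 1) < r" "r \<le> grid_point T n (Suc (k - 1))"
    using assms by (simp_all add: grid_point_def of_nat_diff field_simps)
  then show ?thesis
    using k by (intro exI[of _ "k - 1"]) auto
qed

locale exposure_integral =
  fixes w \<Phi> :: "real \<Rightarrow> real" and K :: real
  assumes w_measurable [measurable]: "w \<in> borel_measurable borel"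
    and w_nonneg: "\<And>u. 0 \<le> u \<Longrightarrow> 0 \<le> w u"
    and w_le: "\<And>u. 0 \<le> u \<Longrightarrow> w u \<le> K * u"
    and \<Phi>_mono: "\<And>x y. 0 \<le> x \<Longrightarrow> x \<le> y \<Longrightarrow> \<Phi> x \<le> \<Phi> y"
    and \<Phi>_zero: "\<Phi> 0 = 0"
begin

lemma K_nonneg: "0 \<le> K"
  using w_nonneg[of 1] w_le[of 1] by simp

definition cum :: "real \<Rightarrow> real" where
  "cum x = (LINT u:{0..x}|lborel. w u)"

text \<open>Clamping the argument of \<open>\<Phi>\<close> at 0 makes the damping factor monotone, hence measurable.\<close>

definition damped :: "real \<Rightarrow> real" where
  "damped u = w u * exp (- \<Phi> (max 0 u))"

definition cum_damped :: "real \<Rightarrow> real" where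
  "cum_damped x = (LINT u:{0..x}|lborel. damped u)"

definition lower_sum :: "real \<Rightarrow> nat \<Rightarrow> real" where
  "lower_sum T n = (\<Sum>j<n. (cum (grid_point T n (Suc j)) - cum (grid_point T n j))
      * exp (- \<Phi> (grid_point T n (Suc j))))"

definition upper_sum :: "real \<Rightarrow> nat \<Rightarrow> real" where
  "upper_sum T n = (\<Sum>j<n. exp (- \<Phi> (grid_point T n j))
      * (cum (grid_point T n (Suc j)) - cum (grid_point T n j)))"

lemma cum_damped_zero: "cum_damped 0 = 0"
  unfolding cum_damped_def by (rule set_integral_singleton_Icc)

lemma damped_measurable [measurable]: "damped \<in> borel_measurable borel"
proof -
  have "mono (\<lambda>u. \<Phi> (max 0 u))"
    by (auto simp: mono_def intro!: \<Phi>_mono)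
  then have [measurable]: "(\<lambda>u. \<Phi> (max 0 u)) \<in> borel_measurable borel"
    by (rule borel_measurable_mono)
  show ?thesis
    unfolding damped_def by measurable
qed

lemma damped_between:
  assumes "0 \<le> s" "s \<le> u" "u \<le> t"
  shows "exp (- \<Phi> t) * w u \<le> damped u" and "damped u \<le> exp (- \<Phi> s) * w u"
proof -
  have "exp (- \<Phi> t) \<le> exp (- \<Phi> u)" "exp (- \<Phi> u) \<le> exp (- \<Phi> s)"
    using assms by (auto intro!: \<Phi>_mono)
  then show "exp (- \<Phi> t) * w u \<le> damped u" "damped u \<le> exp (- \<Phi> s) * w u"
    using assms w_nonneg[of u] by (auto simp: damped_def max_def mult.commute intro: mult_left_mono)
qed

lemma damped_bounds: "0 \<le> u \<Longrightarrow> 0 \<le> damped u \<and> damped u \<le> w u"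
  using damped_between(2)[of 0 u u] w_nonneg[of u] by (simp add: damped_def \<Phi>_zero)

lemma set_integrable_w: "set_integrable lborel {0..c} w"
proof (rule set_integrable_Icc_bounded[where B = "K * \<bar>c\<bar>"])
  fix u assume "0 \<le> u" "u \<le> c"
  then show "\<bar>w u\<bar> \<le> K * \<bar>c\<bar>"
    using w_nonneg[of u] w_le[of u] K_nonneg mult_left_mono[of u "\<bar>c\<bar>" K] by simp
qed simp

lemma set_integrable_damped: "set_integrable lborel {0..c} damped"
proof (rule set_integrable_Icc_bounded[where B = "K * \<bar>c\<bar>"])
  fix u assume "0 \<le> u" "u \<le> c"
  then show "\<bar>damped u\<bar> \<le> K * \<bar>c\<bar>"
    using damped_bounds[of u] w_le[of u] K_nonneg mult_left_mono[of u "\<bar>c\<bar>" K] by simp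
qed simp

lemma cum_increment_bounds:
  assumes "0 \<le> s" "s \<le> t"
  shows "0 \<le> cum t - cum s" and "cum t - cum s \<le> K * t * (t - s)"
proof -
  have int: "set_integrable lborel {s<..t} w"
    using set_integrable_w by (rule set_integrable_subset) (use assms in auto)
  have eq: "cum t - cum s = (LINT u:{s<..t}|lborel. w u)"
    unfolding cum_def using set_integrable_w assms by (rule set_integral_Ioc_eq_diff[symmetric])
  show "0 \<le> cum t - cum s"
    unfolding eq set_lebesgue_integral_def
    by (rule integral_nonneg_AE) (use assms in \<open>auto simp: indicator_def intro!: AE_I2 w_nonneg\<close>)
  have "(LINT u:{s<..t}|lborel. w u) \<le> (LINT u:{s<..t}|lborel. K * t)"
  proof (rule set_integral_mono[OF int])
    show "set_integrable lborel {s<..t} (\<lambda>u. K * t)"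
      using assms by (simp add: set_integrable_def)
    fix u assume "u \<in> {s<..t}"
    then show "w u \<le> K * t"
      using assms w_le[of u] K_nonneg mult_left_mono[of u t K] by simp
  qed
  then show "cum t - cum s \<le> K * t * (t - s)"
    using assms by (simp add: eq set_integral_const mult_ac)
qed

lemma cum_damped_increment_bounds:
  assumes "0 \<le> s" "s \<le> t"
  shows "exp (- \<Phi> t) * (cum t - cum s) \<le> cum_damped t - cum_damped s"
    and "cum_damped t - cum_damped s \<le> exp (- \<Phi> s) * (cum t - cum s)"
proof -
  have intw: "set_integrable lborel {s<..t} w"
    using set_integrable_w by (rule set_integrable_subset) (use assms in auto)
  have intd: "set_integrable lborel {s<..t} damped"
    using set_integrable_damped by (rule set_integrable_subset) (use assms in auto)
  have eqw: "cum t - cum s = (LINT u:{s<..t}|lborel. w u)"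
    unfolding cum_def using set_integrable_w assms by (rule set_integral_Ioc_eq_diff[symmetric])
  have eqd: "cum_damped t - cum_damped s = (LINT u:{s<..t}|lborel. damped u)"
    unfolding cum_damped_def using set_integrable_damped assms by (rule set_integral_Ioc_eq_diff[symmetric])
  have "(LINT u:{s<..t}|lborel. exp (- \<Phi> t) * w u) \<le> (LINT u:{s<..t}|lborel. damped u)"
    using assms intw intd damped_between(1)
    by (intro set_integral_mono set_integrable_mult_right) auto
  then show "exp (- \<Phi> t) * (cum t - cum s) \<le> cum_damped t - cum_damped s"
    by (simp add: eqw eqd)
  have "(LINT u:{s<..t}|lborel. damped u) \<le> (LINT u:{s<..t}|lborel. exp (- \<Phi> s) * w u)"
    using assms intw intd damped_between(2)
    by (intro set_integral_mono set_integrable_mult_right) auto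
  then show "cum_damped t - cum_damped s \<le> exp (- \<Phi> s) * (cum t - cum s)"
    by (simp add: eqw eqd)
qed

lemma riemann_sums_bracket:
  assumes T: "0 < T" and n: "0 < n"
  shows "lower_sum T n \<le> cum_damped T" and "cum_damped T \<le> upper_sum T n"
proof -
  let ?\<tau> = "grid_point T n"
  have \<tau>: "0 \<le> ?\<tau> j" "?\<tau> j \<le> ?\<tau> (Suc j)" for j
    using T by (auto intro: grid_point_nonneg grid_point_mono)
  have "(\<Sum>j<n. cum_damped (?\<tau> (Suc j)) - cum_damped (?\<tau> j)) = cum_damped (?\<tau> n) - cum_damped (?\<tau> 0)"
    by (rule sum_lessThan_telescope)
  then have telescope: "cum_damped T = (\<Sum>j<n. cum_damped (?\<tau> (Suc j)) - cum_damped (?\<tau> j))"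
    using n by (simp add: grid_point_ends cum_damped_zero)
  show "lower_sum T n \<le> cum_damped T"
    unfolding lower_sum_def telescope
  proof (rule sum_mono)
    fix j
    show "(cum (?\<tau> (Suc j)) - cum (?\<tau> j)) * exp (- \<Phi> (?\<tau> (Suc j))) \<le>
        cum_damped (?\<tau> (Suc j)) - cum_damped (?\<tau> j)"
      using cum_damped_increment_bounds(1)[OF \<tau>(1,2)] by (simp add: mult.commute)
  qed
  show "cum_damped T \<le> upper_sum T n"
    unfolding upper_sum_def telescope
  proof (rule sum_mono)
    fix j
    show "cum_damped (?\<tau> (Suc j)) - cum_damped (?\<tau> j) \<le>
        exp (- \<Phi> (?\<tau> j)) * (cum (?\<tau> (Suc j)) - cum (?\<tau> j))"
      using cum_damped_increment_bounds(2)[OF \<tau>(1,2)] .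
  qed
qed

lemma upper_minus_lower_sum_le:
  assumes T: "0 < T" and n: "0 < n"
  shows "upper_sum T n - lower_sum T n \<le> K * T * T / real n"
proof -
  let ?\<tau> = "grid_point T n"
  define D where "D j = cum (?\<tau> (Suc j)) - cum (?\<tau> j)" for j
  define e where "e j = exp (- \<Phi> (?\<tau> j))" for j
  have \<tau>: "0 \<le> ?\<tau> j" "?\<tau> j \<le> ?\<tau> (Suc j)" for j
    using T by (auto intro: grid_point_nonneg grid_point_mono)
  have D_le: "D j \<le> K * T * T / real n" if "j < n" for j
  proof -
    have "D j \<le> K * ?\<tau> (Suc j) * (T / real n)"
      using cum_increment_bounds(2)[OF \<tau>, of j] by (simp add: D_def grid_point_step)
    also have "\<dots> \<le> K * T * (T / real n)"
      using that T K_nonneg \<tau> grid_point_le_end[of T "Suc j" n]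
      by (intro mult_right_mono mult_left_mono) auto
    finally show ?thesis
      by simp
  qed
  have "upper_sum T n - lower_sum T n = (\<Sum>j<n. (e j - e (Suc j)) * D j)"
    unfolding upper_sum_def lower_sum_def D_def e_def by (simp add: sum_subtractf[symmetric] algebra_simps)
  also have "\<dots> \<le> (\<Sum>j<n. (e j - e (Suc j)) * (K * T * T / real n))"
    using \<tau> D_le by (intro sum_mono mult_left_mono) (auto simp: e_def intro!: \<Phi>_mono)
  also have "\<dots> = (\<Sum>j<n. e j - e (Suc j)) * (K * T * T / real n)"
    by (rule sum_distrib_right[symmetric])
  also have "\<dots> = (e 0 - e n) * (K * T * T / real n)"
    by (simp only: sum_lessThan_telescope')
  also have "\<dots> \<le> 1 * (K * T * T / real n)"
    using T K_nonneg by (intro mult_right_mono) (auto simp: e_def grid_point_ends \<Phi>_zero)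
  finally show ?thesis
    by simp
qed

lemma cum_damped_bracket:
  assumes T: "0 < T"
    and low: "\<And>n. 0 < n \<Longrightarrow> lower_sum T n \<le> P"
    and upp: "\<And>n. 0 < n \<Longrightarrow> P \<le> upper_sum T n + exp (- \<Phi> T)"
  shows "cum_damped T \<le> P" and "P \<le> cum_damped T + exp (- \<Phi> T)"
proof -
  have lim: "(\<lambda>n. x + K * T * T / real n) \<longlonglongrightarrow> x" for x
    using tendsto_add[OF tendsto_const lim_const_over_n] by simp
  have approx: "cum_damped T \<le> P + K * T * T / real n"
    "P \<le> cum_damped T + exp (- \<Phi> T) + K * T * T / real n" if "n \<ge> 1" for n
    using riemann_sums_bracket[OF T, of n] upper_minus_lower_sum_le[OF T, of n] low[of n] upp[of n] that
    by linarith+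
  show "cum_damped T \<le> P"
    by (rule LIMSEQ_le_const[OF lim]) (intro exI[of _ 1] allI impI approx(1))
  show "P \<le> cum_damped T + exp (- \<Phi> T)"
    by (rule LIMSEQ_le_const[OF lim]) (intro exI[of _ 1] allI impI approx(2))
qed

lemma set_integrable_damped_nonneg:
  assumes bound: "\<And>T. 0 < T \<Longrightarrow> cum_damped T \<le> P"
  shows "set_integrable lborel {0..} damped"
proof -
  define f where "f i x = ennreal (indicator {0..real i} x * damped x)" for i :: nat and x
  have meas: "f i \<in> borel_measurable lborel" for i
    unfolding f_def by measurable
  have inc: "incseq f"
  proof (intro incseq_SucI le_funI)
    fix i x
    show "f i x \<le> f (Suc i) x"
      by (cases "0 \<le> x") (auto simp: f_def indicator_def damped_bounds)
  qed
  have lim: "(\<lambda>i. f i x) \<longlonglongrightarrow> ennreal (indicator {0..} x * damped x)" for x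
  proof (rule tendsto_eventually)
    obtain N :: nat where "x \<le> real N"
      using real_arch_simple by blast
    then show "eventually (\<lambda>i. f i x = ennreal (indicator {0..} x * damped x)) sequentially"
      unfolding f_def eventually_sequentially by (intro exI[of _ N]) (auto simp: indicator_def)
  qed
  have bounded: "(\<integral>\<^sup>+x. f i x \<partial>lborel) \<le> ennreal (max 0 P)" for i
  proof -
    have "(\<integral>\<^sup>+x. f i x \<partial>lborel) = ennreal (\<integral>x. indicator {0..real i} x * damped x \<partial>lborel)"
      unfolding f_def using set_integrable_damped[of "real i"]
      by (intro nn_integral_eq_integral) (auto simp: set_integrable_def indicator_def damped_bounds intro!: AE_I2)
    also have "\<dots> = ennreal (cum_damped (real i))"
      by (simp add: cum_damped_def set_lebesgue_integral_def)
    also have "\<dots> \<le> ennreal (max 0 P)"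
      using bound[of "real i"] by (cases "i = 0") (auto intro!: ennreal_leI simp: cum_damped_zero)
    finally show ?thesis .
  qed
  have "(\<integral>\<^sup>+x. ennreal (indicator {0..} x * damped x) \<partial>lborel) \<le> ennreal (max 0 P)"
    using nn_integral_LIMSEQ[OF inc meas lim] bounded by (intro LIMSEQ_le_const2) auto
  then have "(\<integral>\<^sup>+x. ennreal (indicator {0..} x * damped x) \<partial>lborel) < \<infinity>"
    by (rule le_less_trans) simp
  moreover have "AE x in lborel. 0 \<le> indicator {0..} x * damped x"
    by (intro AE_I2) (simp add: indicator_def damped_bounds)
  ultimately show ?thesis
    unfolding set_integrable_def by (intro integrableI_nonneg) simp_all
qed

theorem eq_integral_if_between_riemann_sums:
  assumes \<Phi>_lim: "filterlim \<Phi> at_top at_top"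
    and low: "\<And>T n. 0 < T \<Longrightarrow> 0 < n \<Longrightarrow> lower_sum T n \<le> P"
    and upp: "\<And>T n. 0 < T \<Longrightarrow> 0 < n \<Longrightarrow> P \<le> upper_sum T n + exp (- \<Phi> T)"
  shows "P = (LINT r:{0<..}|lborel. w r * exp (- \<Phi> r))"
proof -
  have bracket: "cum_damped T \<le> P" "P \<le> cum_damped T + exp (- \<Phi> T)" if "0 < T" for T
    using cum_damped_bracket[OF that low[OF that] upp[OF that]] by auto
  have int: "set_integrable lborel {0..} damped"
    using bracket(1) by (rule set_integrable_damped_nonneg)
  have "((\<lambda>T. P - cum_damped T) \<longlongrightarrow> P - (LINT u:{0..}|lborel. damped u)) at_top"
    unfolding cum_damped_def by (intro tendsto_diff tendsto_const tendsto_set_lebesgue_integral_at_top int) auto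
  moreover have "((\<lambda>T. P - cum_damped T) \<longlongrightarrow> 0) at_top"
  proof (rule tendsto_sandwich[OF _ _ tendsto_const])
    show "((\<lambda>T. exp (- \<Phi> T)) \<longlongrightarrow> 0) at_top"
      by (rule filterlim_compose[OF exp_at_bot filterlim_compose[OF filterlim_uminus_at_bot_at_top \<Phi>_lim]])
    show "eventually (\<lambda>T. 0 \<le> P - cum_damped T) at_top"
      using eventually_gt_at_top[of 0] by (rule eventually_mono) (auto dest: bracket)
    show "eventually (\<lambda>T. P - cum_damped T \<le> exp (- \<Phi> T)) at_top"
      using eventually_gt_at_top[of 0] by (rule eventually_mono) (auto dest: bracket)
  qed
  ultimately have "P - (LINT u:{0..}|lborel. damped u) = 0"
    by (rule tendsto_unique[rotated]) simp
  then have "P = (LINT u:{0..}|lborel. damped u)"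
    by simp
  also have "\<dots> = (LINT u:{0<..}|lborel. damped u)"
  proof (rule set_integral_cong_set)
    show "AE u in lborel. (u \<in> {0<..}) = (u \<in> {0 :: real..})"
      by (rule AE_I'[where N = "{0}"]) auto
  qed (auto simp: set_borel_measurable_def)
  also have "\<dots> = (LINT r:{0<..}|lborel. w r * exp (- \<Phi> r))"
    by (rule set_lebesgue_integral_cong) (auto simp: damped_def)
  finally show ?thesis .
qed

end

section \<open>Association with one tier and link type\<close>

lemma finite_locally_finite_Int:
  "locally_finite S \<Longrightarrow> A \<subseteq> {z. norm (fst z) \<le> c} \<Longrightarrow> finite (S \<inter> A)"
  unfolding locally_finite_def by (rule finite_subset[of _ "{z \<in> S. norm (fst z) \<le> c}"]) auto

lemma cnt_eq_0_iff: "finite (\<Psi> \<omega> \<inter> A) \<Longrightarrow> cnt \<Psi> A \<omega> = 0 \<longleftrightarrow> \<Psi> \<omega> \<inter> A = {}"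
  by (simp add: cnt_def)

lemma cnt_eq_1_iff: "cnt \<Psi> A \<omega> = 1 \<longleftrightarrow> (\<exists>z. \<Psi> \<omega> \<inter> A = {z})"
  unfolding cnt_def using card_1_singleton_iff[of "\<Psi> \<omega> \<inter> A"] by (simp only: One_nat_def)

lemma locally_finite_Int_empty_iff:
  assumes "locally_finite S"
  shows "S \<inter> A = {} \<longleftrightarrow> (\<forall>N::nat. card (S \<inter> (A \<inter> {z. norm (fst z) \<le> real N})) = 0)"
proof
  assume "\<forall>N::nat. card (S \<inter> (A \<inter> {z. norm (fst z) \<le> real N})) = 0"
  moreover have "finite (S \<inter> (A \<inter> {z. norm (fst z) \<le> real N}))" for N
    using assms by (rule finite_locally_finite_Int) auto
  ultimately have "S \<inter> (A \<inter> {z. norm (fst z) \<le> real N}) = {}" for N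
    by simp
  moreover have "\<exists>N::nat. norm (fst z) \<le> real N" for z
    by (rule real_arch_simple)
  ultimately show "S \<inter> A = {}"
    by blast
qed (simp add: Int_assoc[symmetric])

text \<open>\<open>\<Psi>o\<close> is the tier whose \<open>b\<close>-links are examined, with (biased) transmit power \<open>Po\<close>;
  \<open>\<Psi>t\<close> is the other tier, with transmit power \<open>Pt\<close>.\<close>

locale serving_tier =
  fixes M :: "'a measure" and \<Psi>o \<Psi>t :: "'a \<Rightarrow> (pt \<times> bool) set"
    and lo lt :: real and qo qt :: "real \<Rightarrow> real"
    and Po Pt LL LNL aL aNL :: real and b :: bool
  assumes ppp: "two_tier_marked_ppp M \<Psi>o (marked_intensity lo qo) \<Psi>t (marked_intensity lt qt)"
    and own_tier: "marked_tier lo qo" and other_tier: "marked_tier lt qt" and lo_pos: "0 < lo"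
    and pos: "0 < Po" "0 < Pt" "0 < LL" "0 < LNL" "0 < aL" "0 < aNL"
begin

sublocale own: marked_tier lo qo
  by (rule own_tier)

sublocale other: marked_tier lt qt
  by (rule other_tier)

sublocale prob_space M
  using ppp by (simp add: two_tier_marked_ppp_def)

definition gain :: "bool \<Rightarrow> real" where
  "gain \<beta> = (if \<beta> then LL else LNL)"

definition expo :: "bool \<Rightarrow> real" where
  "expo \<beta> = (if \<beta> then aL else aNL)"

lemma gain_pos: "0 < gain \<beta>" and expo_pos: "0 < expo \<beta>"
  using pos by (simp_all add: gain_def expo_def)

lemma rx_power_eq: "rx_power Pw LL LNL aL aNL z = Pw * gain (snd z) * norm (fst z) powr (- expo (snd z))"
  by (simp add: rx_power_def gain_def expo_def)

definition serving_power :: "real \<Rightarrow> real" where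
  "serving_power t = Po * gain b * t powr (- expo b)"

text \<open>Within distance \<open>radius Pw \<beta> t\<close> a \<open>\<beta>\<close>-link of transmit power \<open>Pw\<close> is at least as strong as an
  own-tier \<open>b\<close>-link at distance \<open>t\<close>; \<open>region Pw t\<close> collects these points of a tier.\<close>

definition radius :: "real \<Rightarrow> bool \<Rightarrow> real \<Rightarrow> real" where
  "radius Pw \<beta> t = power_radius (Pw * gain \<beta>) (expo \<beta>) (Po * gain b) (expo b) t"

definition region :: "real \<Rightarrow> real \<Rightarrow> (pt \<times> bool) set" where
  "region Pw t = annulus True 0 (radius Pw True t) \<union> annulus False 0 (radius Pw False t)"

definition exposure :: "real \<Rightarrow> real" where
  "exposure t = radial_mass lo qo True (radius Po True t) + radial_mass lo qo False (radius Po False t)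
     + radial_mass lt qt True (radius Pt True t) + radial_mass lt qt False (radius Pt False t)"

lemma serving_power_pos: "0 < t \<Longrightarrow> 0 < serving_power t"
  using pos gain_pos by (simp add: serving_power_def)

lemma serving_power_less_iff: "0 < u \<Longrightarrow> 0 < t \<Longrightarrow> serving_power u < serving_power t \<longleftrightarrow> t < u"
  using power_less_iff_power_radius_less[of "Po * gain b" "Po * gain b" "expo b" "expo b" u t] pos gain_pos expo_pos
  by (simp add: serving_power_def power_radius_self)

lemma rx_power_serving: "snd z = b \<Longrightarrow> rx_power Po LL LNL aL aNL z = serving_power (norm (fst z))"
  by (simp add: rx_power_eq serving_power_def)

lemma rx_power_nonneg: "0 < Pw \<Longrightarrow> 0 \<le> rx_power Pw LL LNL aL aNL z"
  unfolding rx_power_eq using gain_pos[of "snd z"] by (intro mult_nonneg_nonneg) auto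

lemma rx_power_origin: "norm (fst z) = 0 \<Longrightarrow> rx_power Pw LL LNL aL aNL z = 0"
  by (simp add: rx_power_eq)

lemma radius_nonneg: "0 \<le> radius Pw \<beta> t"
  by (simp add: radius_def power_radius_nonneg)

lemma radius_zero: "radius Pw \<beta> 0 = 0"
  using expo_pos by (simp add: radius_def power_radius_zero)

lemma radius_mono: "0 \<le> s \<Longrightarrow> s \<le> t \<Longrightarrow> radius Pw \<beta> s \<le> radius Pw \<beta> t"
  using expo_pos by (simp add: radius_def power_radius_mono)

lemma radius_serving: "0 \<le> t \<Longrightarrow> radius Po b t = t"
  using pos gain_pos expo_pos by (simp add: radius_def power_radius_self)

lemma radius_split:
  assumes "0 < Pw"
  shows "radius Pw \<beta> r = (Pw / Po) powr (1 / expo \<beta>) * (gain \<beta> / gain b) powr (1 / expo \<beta>) * r powr (expo b / expo \<beta>)"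
proof -
  have "(Pw * gain \<beta> / (Po * gain b)) powr (1 / expo \<beta>) =
      (Pw / Po) powr (1 / expo \<beta>) * (gain \<beta> / gain b) powr (1 / expo \<beta>)"
    unfolding times_divide_times_eq[symmetric] using assms pos gain_pos by (intro powr_mult; simp)
  then show ?thesis
    by (simp only: radius_def power_radius_def)
qed

lemma region_mem: "y \<in> region Pw t \<longleftrightarrow> 0 < norm (fst y) \<and> norm (fst y) \<le> radius Pw (snd y) t"
  by (cases "snd y") (auto simp: region_def annulus_def)

lemma region_iff:
  assumes "0 < Pw" "0 < t"
  shows "y \<in> region Pw t \<longleftrightarrow> 0 < norm (fst y) \<and> serving_power t \<le> rx_power Pw LL LNL aL aNL y"
proof -
  note region_mem
  moreover have "radius Pw (snd y) t < norm (fst y) \<longleftrightarrow> rx_power Pw LL LNL aL aNL y < serving_power t"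
    if "0 < norm (fst y)"
    using power_less_iff_power_radius_less[of "Pw * gain (snd y)" "Po * gain b" "expo (snd y)" "expo b"]
      assms that pos gain_pos expo_pos
    by (simp add: radius_def rx_power_eq serving_power_def)
  ultimately show ?thesis
    by (meson not_le)
qed

lemma rx_power_less_iff_not_in_region:
  assumes "0 < Pw" "0 < t"
  shows "rx_power Pw LL LNL aL aNL y < serving_power t \<longleftrightarrow> y \<notin> region Pw t"
proof (cases "norm (fst y) = 0")
  case True
  then show ?thesis
    using serving_power_pos[OF assms(2)] by (simp add: rx_power_origin region_mem)
next
  case False
  then show ?thesis
    using region_iff[OF assms, of y] by auto
qed

lemma region_zero: "region Pw 0 = {}"
  by (simp add: region_def radius_zero annulus_empty)

lemma annulus_subset_region:
  assumes "0 \<le> s"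
  shows "annulus b s t \<subseteq> region Po t"
proof
  fix z assume "z \<in> annulus b s t"
  then have "snd z = b" "0 < norm (fst z)" "norm (fst z) \<le> t" "0 \<le> t"
    using assms by (auto simp: annulus_def)
  then show "z \<in> region Po t"
    by (simp add: region_mem radius_serving)
qed

lemma region_bounded: "region Pw t \<subseteq> {z. norm (fst z) \<le> max (radius Pw True t) (radius Pw False t)}"
  by (auto simp: region_def annulus_def)

lemma region_in_mark_space: "region Pw t \<in> sets mark_space"
  by (simp add: region_def annulus_in_mark_space sets.Un)

lemma exposure_eq:
  "exposure t = measure (marked_intensity lo qo) (region Po t) + measure (marked_intensity lt qt) (region Pt t)"
  by (simp add: exposure_def region_def own.measure_annuli other.measure_annuli radius_nonneg)

lemma exposure_zero: "exposure 0 = 0"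
  by (simp add: exposure_def radius_zero)

lemma exposure_mono: "0 \<le> s \<Longrightarrow> s \<le> t \<Longrightarrow> exposure s \<le> exposure t"
  unfolding exposure_def
  by (intro add_mono own.radial_mass_mono other.radial_mass_mono radius_mono radius_nonneg)

lemma filterlim_exposure_at_top: "filterlim exposure at_top at_top"
proof -
  let ?m = "\<lambda>t. min (radius Po True t) (radius Po False t)"
  have lim: "filterlim (radius Po \<beta>) at_top at_top" for \<beta>
    unfolding radius_def[abs_def] using pos gain_pos expo_pos by (intro filterlim_power_radius_at_top) auto
  have mlim: "filterlim ?m at_top at_top"
    unfolding filterlim_at_top
  proof
    fix Z :: real
    have "eventually (\<lambda>t. Z \<le> radius Po True t) at_top" "eventually (\<lambda>t. Z \<le> radius Po False t) at_top"
      using lim unfolding filterlim_at_top by blast+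
    then show "eventually (\<lambda>t. Z \<le> ?m t) at_top"
      by eventually_elim simp
  qed
  have "filterlim (\<lambda>t. (?m t)\<^sup>2) at_top at_top"
    using filterlim_compose[OF filterlim_pow_at_top[OF pos2 filterlim_ident] mlim] by simp
  then have "filterlim (\<lambda>t. pi * lo * (?m t)\<^sup>2) at_top at_top"
    using lo_pos by (intro filterlim_tendsto_pos_mult_at_top[OF tendsto_const]) auto
  moreover have "eventually (\<lambda>t. pi * lo * (?m t)\<^sup>2 \<le> exposure t) at_top"
  proof (rule eventually_mono[OF eventually_ge_at_top[of 0]])
    fix t :: real assume "0 \<le> t"
    have "pi * lo * (?m t)\<^sup>2 = radial_mass lo qo True (?m t) + radial_mass lo qo False (?m t)"
      by (simp add: own.radial_mass_LoS_plus_NLoS radius_nonneg)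
    also have "\<dots> \<le> radial_mass lo qo True (radius Po True t) + radial_mass lo qo False (radius Po False t)"
      by (intro add_mono own.radial_mass_mono) (auto simp: radius_nonneg)
    also have "\<dots> \<le> exposure t"
      unfolding exposure_def using other.radial_mass_nonneg by simp
    finally show "pi * lo * (?m t)\<^sup>2 \<le> exposure t" .
  qed
  ultimately show ?thesis
    by (rule filterlim_at_top_mono)
qed

abbreviation "\<mu>o \<equiv> marked_intensity lo qo"
abbreviation "\<mu>t \<equiv> marked_intensity lt qt"
abbreviation "po \<equiv> rx_power Po LL LNL aL aNL"
abbreviation "pt \<equiv> rx_power Pt LL LNL aL aNL"
abbreviation "E \<equiv> serving_event M \<Psi>o po \<Psi>t pt b"

lemma locally_finite_points: "\<omega> \<in> space M \<Longrightarrow> locally_finite (\<Psi>o \<omega>) \<and> locally_finite (\<Psi>t \<omega>)"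
  using ppp by (simp add: two_tier_marked_ppp_def)

lemma cnt_bounded_eq_0_iff:
  assumes "\<omega> \<in> space M" "A \<subseteq> {z. norm (fst z) \<le> c}"
  shows "cnt \<Psi>o A \<omega> = 0 \<longleftrightarrow> \<Psi>o \<omega> \<inter> A = {}" and "cnt \<Psi>t A \<omega> = 0 \<longleftrightarrow> \<Psi>t \<omega> \<inter> A = {}"
  using locally_finite_points[OF assms(1)] finite_locally_finite_Int[OF _ assms(2)]
  by (simp_all add: cnt_eq_0_iff)

lemma count_measurable:
  assumes "A \<in> sets mark_space" "A \<subseteq> {z. norm (fst z) \<le> c}"
  shows "{\<omega> \<in> space M. cnt \<Psi>o A \<omega> = k} \<in> events" and "{\<omega> \<in> space M. cnt \<Psi>t A \<omega> = k} \<in> events"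
  using assms own.emeasure_bounded_finite other.emeasure_bounded_finite
  by (auto intro: count_event_measurable[OF ppp] count_event_measurable[OF two_tier_marked_ppp_swap[OF ppp]])

lemma region_minus_annulus_bounded:
  "region Pw t - A \<subseteq> {z. norm (fst z) \<le> max (radius Pw True t) (radius Pw False t)}"
  using region_bounded by blast

lemma intensity_finite:
  "emeasure \<mu>o (annulus \<beta> a c) < \<infinity>" "emeasure \<mu>o (region Pw t) < \<infinity>"
  "emeasure \<mu>o (region Pw t - annulus \<beta> a c) < \<infinity>" "emeasure \<mu>t (region Pw t) < \<infinity>"
  by (rule own.emeasure_bounded_finite[OF annulus_in_mark_space annulus_bounded]
      own.emeasure_bounded_finite[OF region_in_mark_space region_bounded]
      own.emeasure_bounded_finite[OF sets.Diff[OF region_in_mark_space annulus_in_mark_space]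
        region_minus_annulus_bounded]
      other.emeasure_bounded_finite[OF region_in_mark_space region_bounded])+

text \<open>Along a grid, the disjoint events \<open>lone\<close> lie inside the association event and give the lower
  Riemann--Stieltjes sum; the differences of consecutive \<open>vacant\<close> events cover it and give the upper one.\<close>

definition lone :: "real \<Rightarrow> real \<Rightarrow> 'a set" where
  "lone s t = {\<omega> \<in> space M. cnt \<Psi>o (annulus b s t) \<omega> = 1 \<and>
     cnt \<Psi>o (region Po t - annulus b s t) \<omega> = 0 \<and> cnt \<Psi>t (region Pt t) \<omega> = 0}"

definition vacant :: "real \<Rightarrow> real \<Rightarrow> 'a set" where
  "vacant s t = {\<omega> \<in> space M. cnt \<Psi>o (annulus b s t) \<omega> = 0 \<and>
     cnt \<Psi>o (region Po s) \<omega> = 0 \<and> cnt \<Psi>t (region Pt s) \<omega> = 0}"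

lemma lone_measurable: "lone s t \<in> events"
proof -
  have "lone s t = {\<omega> \<in> space M. cnt \<Psi>o (annulus b s t) \<omega> = 1} \<inter>
      {\<omega> \<in> space M. cnt \<Psi>o (region Po t - annulus b s t) \<omega> = 0} \<inter> {\<omega> \<in> space M. cnt \<Psi>t (region Pt t) \<omega> = 0}"
    by (auto simp: lone_def)
  also have "\<dots> \<in> events"
    using annulus_in_mark_space region_in_mark_space
    by (intro sets.Int count_measurable(1)[OF _ annulus_bounded] count_measurable(1)[OF _ region_minus_annulus_bounded]
        count_measurable(2)[OF _ region_bounded]) (auto intro: sets.Diff)
  finally show ?thesis .
qed

lemma vacant_measurable: "vacant s t \<in> events"
proof -
  have "vacant s t = {\<omega> \<in> space M. cnt \<Psi>o (annulus b s t) \<omega> = 0} \<inter>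
      {\<omega> \<in> space M. cnt \<Psi>o (region Po s) \<omega> = 0} \<inter> {\<omega> \<in> space M. cnt \<Psi>t (region Pt s) \<omega> = 0}"
    by (auto simp: vacant_def)
  also have "\<dots> \<in> events"
    using annulus_in_mark_space region_in_mark_space
    by (intro sets.Int count_measurable(1)[OF _ annulus_bounded] count_measurable(1)[OF _ region_bounded]
        count_measurable(2)[OF _ region_bounded]) auto
  finally show ?thesis .
qed

lemma prob_lone:
  assumes "0 \<le> s" "s \<le> t"
  shows "prob (lone s t) = (radial_mass lo qo b t - radial_mass lo qo b s) * exp (- exposure t)"
proof -
  let ?A = "annulus b s t" and ?R = "region Po t"
  note fin = intensity_finite(1)[of b s t] intensity_finite(2)[of Po t]
    intensity_finite(3)[of Po t b s t] intensity_finite(4)[of Pt t]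
  have "measure \<mu>o ?A + measure \<mu>o (?R - ?A) = measure \<mu>o ?R"
    using fin annulus_subset_region[OF assms(1)]
    by (simp add: measure_Diff annulus_in_mark_space region_in_mark_space)
  moreover have "prob (lone s t) = measure \<mu>o ?A ^ 1 / fact 1 *
      exp (- (measure \<mu>o ?A + measure \<mu>o (?R - ?A) + measure \<mu>t (region Pt t)))"
    unfolding lone_def using fin
    by (intro prob_counts_two_tiers[OF ppp]) (auto simp: annulus_in_mark_space region_in_mark_space sets.Diff)
  ultimately show ?thesis
    using assms by (simp add: exposure_eq own.measure_annulus(2))
qed

lemma annulus_Int_region:
  assumes "0 \<le> s"
  shows "annulus b s t \<inter> region Po s = {}"
proof (intro equalityI subsetI)
  fix z assume "z \<in> annulus b s t \<inter> region Po s"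
  then have "snd z = b" "s < norm (fst z)" "norm (fst z) \<le> radius Po (snd z) s"
    by (auto simp: annulus_def region_mem)
  then show "z \<in> {}"
    using assms by (simp add: radius_serving)
qed simp

lemma prob_vacant:
  assumes "0 \<le> s" "s \<le> t"
  shows "prob (vacant s t) = exp (- (radial_mass lo qo b t - radial_mass lo qo b s)) * exp (- exposure s)"
proof -
  note fin = intensity_finite(1)[of b s t] intensity_finite(2)[of Po s] intensity_finite(4)[of Pt s]
  have "prob (vacant s t) = measure \<mu>o (annulus b s t) ^ 0 / fact 0 *
      exp (- (measure \<mu>o (annulus b s t) + measure \<mu>o (region Po s) + measure \<mu>t (region Pt s)))"
    unfolding vacant_def using fin annulus_Int_region[OF assms(1)]
    by (intro prob_counts_two_tiers[OF ppp]) (auto simp: annulus_in_mark_space region_in_mark_space)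
  then show ?thesis
    using assms by (simp add: exposure_eq own.measure_annulus(2) exp_add[symmetric] add.assoc)
qed


lemma lone_subset_serving_event:
  assumes "0 \<le> s" "s < t"
  shows "lone s t \<subseteq> E"
proof
  fix \<omega> assume \<omega>: "\<omega> \<in> lone s t"
  then have sp: "\<omega> \<in> space M"
    by (simp add: lone_def)
  from \<omega> have "cnt \<Psi>o (annulus b s t) \<omega> = 1"
    by (simp add: lone_def)
  then obtain z where z: "\<Psi>o \<omega> \<inter> annulus b s t = {z}"
    unfolding cnt_eq_1_iff by blast
  have empty: "\<Psi>o \<omega> \<inter> (region Po t - annulus b s t) = {}" "\<Psi>t \<omega> \<inter> region Pt t = {}"
    using \<omega> cnt_bounded_eq_0_iff(1)[OF sp region_minus_annulus_bounded]
      cnt_bounded_eq_0_iff(2)[OF sp region_bounded] by (auto simp: lone_def)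
  have t: "0 < t"
    using assms by simp
  have zeq: "(fst z, b) = z"
    using z by (auto simp: annulus_def prod_eq_iff)
  have "z \<in> region Po t"
    using z annulus_subset_region[OF assms(1)] by blast
  then have strong: "serving_power t \<le> po z"
    using rx_power_less_iff_not_in_region[OF pos(1) t, of z] by simp
  have weaker: "rx_power Pw LL LNL aL aNL y < po z" if "y \<notin> region Pw t" "0 < Pw" for y Pw
    using rx_power_less_iff_not_in_region[OF that(2) t, of y] that(1) strong by simp
  show "\<omega> \<in> E"
    unfolding serving_event_def
  proof (intro CollectI conjI exI[of _ "fst z"] ballI impI sp, unfold zeq)
    show "z \<in> \<Psi>o \<omega>"
      using z by blast
    fix y assume "y \<in> \<Psi>o \<omega>" "y \<noteq> z"
    then show "po y < po z"
      using z empty weaker[of y Po] pos by blast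
  next
    fix y assume "y \<in> \<Psi>t \<omega>"
    then show "pt y < po z"
      using empty weaker[of y Pt] pos by blast
  qed
qed

lemma lone_disjoint:
  assumes "0 \<le> s" "t \<le> s'" "s' \<le> t'"
  shows "lone s t \<inter> lone s' t' = {}"
proof (rule ccontr)
  assume "lone s t \<inter> lone s' t' \<noteq> {}"
  then obtain \<omega> where \<omega>: "\<omega> \<in> lone s t" "\<omega> \<in> lone s' t'"
    by auto
  then have sp: "\<omega> \<in> space M"
    by (simp add: lone_def)
  from \<omega>(1) have "cnt \<Psi>o (annulus b s t) \<omega> = 1"
    by (simp add: lone_def)
  then obtain z where "\<Psi>o \<omega> \<inter> annulus b s t = {z}"
    unfolding cnt_eq_1_iff by blast
  then have z: "z \<in> \<Psi>o \<omega>" "z \<in> annulus b s t"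
    by auto
  have "\<Psi>o \<omega> \<inter> (region Po t' - annulus b s' t') = {}"
    using \<omega>(2) cnt_bounded_eq_0_iff(1)[OF sp region_minus_annulus_bounded] by (auto simp: lone_def)
  moreover have "z \<in> region Po t' - annulus b s' t'"
    using z(2) assms annulus_subset_region[of 0 t'] by (auto simp: annulus_def)
  ultimately show False
    using z(1) by blast
qed

lemma vacant_of_serving:
  assumes "\<omega> \<in> space M" "(x, b) \<in> \<Psi>o \<omega>"
    and own: "\<And>y. y \<in> \<Psi>o \<omega> \<Longrightarrow> y \<noteq> (x, b) \<Longrightarrow> po y < po (x, b)"
    and other: "\<And>y. y \<in> \<Psi>t \<omega> \<Longrightarrow> pt y < po (x, b)"
    and "0 \<le> t" and far: "norm x = 0 \<or> t < norm x"
  shows "\<omega> \<in> vacant t t"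
proof -
  have "\<Psi>o \<omega> \<inter> region Po t = {} \<and> \<Psi>t \<omega> \<inter> region Pt t = {}"
  proof (cases "t = 0")
    case False
    then have t: "0 < t"
      using \<open>0 \<le> t\<close> by simp
    have "(x, b) \<notin> region Po t"
      using far \<open>0 \<le> t\<close> by (auto simp: region_mem radius_serving)
    then have weak: "po (x, b) < serving_power t"
      using rx_power_less_iff_not_in_region[OF pos(1) t] by simp
    have "po y < serving_power t" if "y \<in> \<Psi>o \<omega>" for y
      using own[OF that] weak by (cases "y = (x, b)") auto
    then have "\<Psi>o \<omega> \<inter> region Po t = {}"
      using rx_power_less_iff_not_in_region[OF pos(1) t] by blast
    moreover have "\<Psi>t \<omega> \<inter> region Pt t = {}"
      using rx_power_less_iff_not_in_region[OF pos(2) t] other weak by force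
    ultimately show ?thesis ..
  qed (simp add: region_zero)
  then show ?thesis
    using assms cnt_bounded_eq_0_iff[OF assms(1) region_bounded]
    by (simp add: vacant_def cnt_def annulus_empty)
qed

lemma serving_event_subset_vacant_cover:
  assumes T: "0 < T" and n: "0 < n"
  shows "E \<subseteq> (\<Union>j<n. vacant (grid_point T n j) (grid_point T n j)
      - vacant (grid_point T n j) (grid_point T n (Suc j))) \<union> vacant T T"
proof
  fix \<omega> assume "\<omega> \<in> E"
  then obtain x where \<omega>: "\<omega> \<in> space M" "(x, b) \<in> \<Psi>o \<omega>"
    and own: "\<forall>y\<in>\<Psi>o \<omega>. y \<noteq> (x, b) \<longrightarrow> po y < po (x, b)"
    and other: "\<forall>y\<in>\<Psi>t \<omega>. pt y < po (x, b)"
    unfolding serving_event_def by blast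
  note vacant = vacant_of_serving[OF \<omega> own[rule_format] other[rule_format]]
  show "\<omega> \<in> (\<Union>j<n. vacant (grid_point T n j) (grid_point T n j)
      - vacant (grid_point T n j) (grid_point T n (Suc j))) \<union> vacant T T"
  proof (cases "norm x = 0 \<or> T < norm x")
    case True
    then show ?thesis
      using vacant T by simp
  next
    case False
    then have "0 < norm x" "norm x \<le> T"
      by auto
    then obtain j where j: "j < n" "grid_point T n j < norm x" "norm x \<le> grid_point T n (Suc j)"
      using grid_interval_exists[OF T n] by blast
    have "\<omega> \<notin> vacant (grid_point T n j) (grid_point T n (Suc j))"
      using \<omega> j cnt_bounded_eq_0_iff(1)[OF \<omega>(1) annulus_bounded] by (auto simp: vacant_def annulus_def)
    moreover have "\<omega> \<in> vacant (grid_point T n j) (grid_point T n j)"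
      using vacant j T by (simp add: grid_point_nonneg)
    ultimately show ?thesis
      using j(1) by blast
  qed
qed


lemma isolating_radius_exists:
  assumes \<omega>: "\<omega> \<in> space M" "(x, b) \<in> \<Psi>o \<omega>"
    and own: "\<And>y. y \<in> \<Psi>o \<omega> \<Longrightarrow> y \<noteq> (x, b) \<Longrightarrow> po y < po (x, b)"
    and other: "\<And>y. y \<in> \<Psi>t \<omega> \<Longrightarrow> pt y < po (x, b)"
    and x: "0 < norm x"
  shows "\<exists>t\<in>\<rat>. norm x < t \<and> \<Psi>o \<omega> \<inter> region Po t \<subseteq> {(x, b)} \<and> \<Psi>t \<omega> \<inter> region Pt t = {}"
proof -
  define r where "r = norm x"
  have r: "0 < r" and px: "po (x, b) = serving_power r"
    using x by (simp_all add: r_def rx_power_serving)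
  have r1: "serving_power (r + 1) < serving_power r"
    using r serving_power_less_iff[of "r + 1" r] by simp
  text \<open>The strongest competitor within the region of distance \<open>r + 1\<close> is strictly weaker than the
    serving link, so the region of some rational \<open>t > r\<close> contains no competitor.\<close>
  define S where "S = insert (serving_power (r + 1))
      (po ` (\<Psi>o \<omega> \<inter> region Po (r + 1) - {(x, b)}) \<union> pt ` (\<Psi>t \<omega> \<inter> region Pt (r + 1)))"
  have "finite S"
    using finite_locally_finite_Int[OF _ region_bounded] locally_finite_points[OF \<omega>(1)]
    unfolding S_def by auto
  moreover have "\<forall>p\<in>S. p < serving_power r"
    using own other r1 unfolding S_def px by auto
  ultimately have q: "Max S < serving_power r" "serving_power (r + 1) \<le> Max S" "\<And>p. p \<in> S \<Longrightarrow> p \<le> Max S"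
    by (auto simp: S_def)
  moreover have "0 < Max S"
    using q(2) serving_power_pos[of "r + 1"] r by linarith
  ultimately obtain t where t: "t \<in> \<rat>" "r < t" "Max S < serving_power t"
    using power_law_crossing_rational[of "Po * gain b" "expo b" r "Max S"] pos gain_pos expo_pos r
    unfolding serving_power_def by auto
  have near: "y \<in> region Pw (r + 1)" "Max S < rx_power Pw LL LNL aL aNL y"
    if "y \<in> region Pw t" "0 < Pw" for y Pw
    using that region_iff[OF that(2), of t y] region_iff[OF that(2), of "r + 1" y] r q(2) t(2,3) by auto
  have "\<Psi>o \<omega> \<inter> region Po t \<subseteq> {(x, b)}"
  proof
    fix y assume y: "y \<in> \<Psi>o \<omega> \<inter> region Po t"
    show "y \<in> {(x, b)}"
    proof (rule ccontr)
      assume "y \<notin> {(x, b)}"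
      then have "po y \<le> Max S"
        using y near[of y Po] pos by (intro q(3)) (auto simp: S_def)
      then show False
        using y near[of y Po] pos by auto
    qed
  qed
  moreover have "\<Psi>t \<omega> \<inter> region Pt t = {}"
  proof (intro equals0I)
    fix y assume y: "y \<in> \<Psi>t \<omega> \<inter> region Pt t"
    then have "pt y \<le> Max S"
      using near[of y Pt] pos by (intro q(3)) (auto simp: S_def)
    then show False
      using y near[of y Pt] pos by auto
  qed
  ultimately show ?thesis
    using t unfolding r_def by blast
qed

lemma serving_point_isolated:
  assumes \<omega>: "\<omega> \<in> space M" "(x, b) \<in> \<Psi>o \<omega>"
    and own: "\<And>y. y \<in> \<Psi>o \<omega> \<Longrightarrow> y \<noteq> (x, b) \<Longrightarrow> po y < po (x, b)"
    and other: "\<And>y. y \<in> \<Psi>t \<omega> \<Longrightarrow> pt y < po (x, b)"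
    and x: "0 < norm x"
  shows "\<exists>t\<in>\<rat>. 0 < t \<and> \<omega> \<in> lone 0 t"
proof -
  obtain t where t: "t \<in> \<rat>" "norm x < t"
    and own_only: "\<Psi>o \<omega> \<inter> region Po t \<subseteq> {(x, b)}" and other_none: "\<Psi>t \<omega> \<inter> region Pt t = {}"
    using isolating_radius_exists[OF assms] by blast
  have xt: "(x, b) \<in> annulus b 0 t"
    using x t by (simp add: annulus_def)
  then have "cnt \<Psi>o (annulus b 0 t) \<omega> = 1"
    unfolding cnt_eq_1_iff using own_only annulus_subset_region[of 0 t] \<omega>(2) by blast
  moreover have "\<Psi>o \<omega> \<inter> (region Po t - annulus b 0 t) = {}"
    using own_only xt by blast
  ultimately have "\<omega> \<in> lone 0 t"
    using \<omega>(1) other_none cnt_bounded_eq_0_iff(1)[OF \<omega>(1) region_minus_annulus_bounded]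
      cnt_bounded_eq_0_iff(2)[OF \<omega>(1) region_bounded] by (simp add: lone_def)
  moreover have "0 < t"
    using t(2) norm_ge_zero[of x] by linarith
  ultimately show ?thesis
    using t(1) by blast
qed

text \<open>A point at the origin receives power \<open>0\<close> (as \<open>0 powr (- \<alpha>) = 0\<close>), so it serves only when it is
  the only point of both tiers.\<close>

definition origin_only :: "'a set" where
  "origin_only = {\<omega> \<in> space M. \<Psi>o \<omega> = {(0, b)} \<and> \<Psi>t \<omega> = {}}"

lemma serving_at_origin:
  assumes "\<omega> \<in> space M" "(0, b) \<in> \<Psi>o \<omega>"
    and own: "\<And>y. y \<in> \<Psi>o \<omega> \<Longrightarrow> y \<noteq> (0, b) \<Longrightarrow> po y < po (0, b)"
    and other: "\<And>y. y \<in> \<Psi>t \<omega> \<Longrightarrow> pt y < po (0, b)"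
  shows "\<omega> \<in> origin_only"
proof -
  have p0: "po (0, b) = 0"
    by (simp add: rx_power_origin)
  have "\<Psi>o \<omega> = {(0, b)}"
  proof (intro equalityI subsetI)
    fix y assume "y \<in> \<Psi>o \<omega>"
    then show "y \<in> {(0, b)}"
      using own p0 rx_power_nonneg[OF pos(1), of y] by fastforce
  qed (use assms(2) in simp)
  moreover have "\<Psi>t \<omega> = {}"
  proof (intro equals0I)
    fix y assume "y \<in> \<Psi>t \<omega>"
    then have "pt y < 0"
      using other p0 by auto
    then show False
      using rx_power_nonneg[OF pos(2), of y] by simp
  qed
  ultimately show ?thesis
    using assms(1) by (simp add: origin_only_def)
qed

lemma serving_event_eq: "E = (\<Union>t\<in>{t \<in> \<rat>. 0 < t}. lone 0 t) \<union> origin_only"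
proof (intro equalityI subsetI)
  fix \<omega> assume "\<omega> \<in> E"
  then obtain x where \<omega>: "\<omega> \<in> space M" "(x, b) \<in> \<Psi>o \<omega>"
    and own: "\<forall>y\<in>\<Psi>o \<omega>. y \<noteq> (x, b) \<longrightarrow> po y < po (x, b)"
    and other: "\<forall>y\<in>\<Psi>t \<omega>. pt y < po (x, b)"
    unfolding serving_event_def by blast
  show "\<omega> \<in> (\<Union>t\<in>{t \<in> \<rat>. 0 < t}. lone 0 t) \<union> origin_only"
  proof (cases "norm x = 0")
    case True
    then have "x = 0"
      by simp
    with \<omega> own other have "\<omega> \<in> origin_only"
      by (intro serving_at_origin) auto
    then show ?thesis
      by simp
  next
    case False
    then show ?thesis
      using serving_point_isolated[OF \<omega> own[rule_format] other[rule_format]] by auto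
  qed
next
  fix \<omega> assume "\<omega> \<in> (\<Union>t\<in>{t \<in> \<rat>. 0 < t}. lone 0 t) \<union> origin_only"
  then consider t where "0 < t" "\<omega> \<in> lone 0 t" | "\<omega> \<in> origin_only"
    by blast
  then show "\<omega> \<in> E"
  proof cases
    case 1
    then show ?thesis
      using lone_subset_serving_event[of 0 t] by blast
  next
    case 2
    then show ?thesis
      by (auto simp: origin_only_def serving_event_def)
  qed
qed

lemma origin_only_measurable: "origin_only \<in> events"
proof -
  let ?D = "\<lambda>N :: nat. {z :: pt \<times> bool. norm (fst z) \<le> real N}"
  have "\<Psi>o \<omega> = {(0, b)} \<longleftrightarrow> cnt \<Psi>o {(0, b)} \<omega> = 1 \<and> (\<forall>N. cnt \<Psi>o (?D N - {(0, b)}) \<omega> = 0)"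
    "\<Psi>t \<omega> = {} \<longleftrightarrow> (\<forall>N. cnt \<Psi>t (?D N) \<omega> = 0)" if "\<omega> \<in> space M" for \<omega>
  proof -
    have "?D N - {(0, b)} = - {(0, b)} \<inter> ?D N" for N
      by auto
    then show "\<Psi>o \<omega> = {(0, b)} \<longleftrightarrow> cnt \<Psi>o {(0, b)} \<omega> = 1 \<and> (\<forall>N. cnt \<Psi>o (?D N - {(0, b)}) \<omega> = 0)"
      using locally_finite_Int_empty_iff[of "\<Psi>o \<omega>" "- {(0, b)}"] locally_finite_points[OF that]
      by (auto simp: cnt_def card_1_singleton_iff)
    show "\<Psi>t \<omega> = {} \<longleftrightarrow> (\<forall>N. cnt \<Psi>t (?D N) \<omega> = 0)"
      using locally_finite_Int_empty_iff[of "\<Psi>t \<omega>" UNIV] locally_finite_points[OF that]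
      by (simp add: cnt_def)
  qed
  then have "origin_only = {\<omega> \<in> space M. cnt \<Psi>o {(0, b)} \<omega> = 1 \<and>
      (\<forall>N. cnt \<Psi>o (?D N - {(0, b)}) \<omega> = 0) \<and> (\<forall>N. cnt \<Psi>t (?D N) \<omega> = 0)}"
    unfolding origin_only_def by (intro Collect_cong) blast
  also have "\<dots> = {\<omega> \<in> space M. cnt \<Psi>o {(0, b)} \<omega> = 1} \<inter>
      (\<Inter>N. {\<omega> \<in> space M. cnt \<Psi>o (?D N - {(0, b)}) \<omega> = 0}) \<inter> (\<Inter>N. {\<omega> \<in> space M. cnt \<Psi>t (?D N) \<omega> = 0})"
    by auto
  moreover have "{\<omega> \<in> space M. cnt \<Psi>o {(0, b)} \<omega> = 1} \<in> events"
    by (rule count_measurable(1)[where c = 0]) (simp_all add: singleton_in_mark_space)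
  moreover have "{\<omega> \<in> space M. cnt \<Psi>o (?D N - {(0, b)}) \<omega> = 0} \<in> events" for N
    by (rule count_measurable(1)[where c = "real N"]) (auto intro: disc_in_mark_space singleton_in_mark_space)
  moreover have "{\<omega> \<in> space M. cnt \<Psi>t (?D N) \<omega> = 0} \<in> events" for N
    by (rule count_measurable(2)[where c = "real N"]) (simp_all add: disc_in_mark_space)
  ultimately show ?thesis
    by (auto intro!: sets.Int sets.countable_INT)
qed

lemma serving_event_measurable: "E \<in> events"
proof -
  have "countable {t \<in> \<rat>. 0 < t}"
    by (rule countable_subset[OF _ countable_rat]) auto
  then show ?thesis
    unfolding serving_event_eq
    by (intro sets.Un sets.countable_UN' origin_only_measurable) (auto intro: lone_measurable)
qed


lemma lower_sum_le_prob:
  assumes T: "0 < T" and n: "0 < n"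
  shows "(\<Sum>j<n. (radial_mass lo qo b (grid_point T n (Suc j)) - radial_mass lo qo b (grid_point T n j))
      * exp (- exposure (grid_point T n (Suc j)))) \<le> prob E"
proof -
  let ?\<tau> = "grid_point T n"
  let ?L = "\<lambda>j. lone (?\<tau> j) (?\<tau> (Suc j))"
  have \<tau>: "0 \<le> ?\<tau> j" "?\<tau> j < ?\<tau> (Suc j)" for j
    using T n by (auto intro: grid_point_nonneg grid_point_strict_mono)
  have "disjoint_family_on ?L {..<n}"
    unfolding disjoint_family_on_def
  proof (intro ballI impI)
    have "?L j \<inter> ?L k = {}" if "j < k" for j k
      using \<tau> grid_point_mono[of T "Suc j" k n] grid_point_mono[of T k "Suc k" n] T that
      by (intro lone_disjoint) auto
    then show "?L j \<inter> ?L k = {}" if "j \<noteq> k" for j k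
      using that by (metis Int_commute linorder_neqE_nat)
  qed
  then have "prob (\<Union>j<n. ?L j) = (\<Sum>j<n. prob (?L j))"
    using lone_measurable by (intro measure_finite_Union) (auto simp: emeasure_eq_measure)
  moreover have "prob (?L j) = (radial_mass lo qo b (?\<tau> (Suc j)) - radial_mass lo qo b (?\<tau> j))
      * exp (- exposure (?\<tau> (Suc j)))" for j
    using \<tau> by (simp add: prob_lone less_imp_le)
  moreover have "prob (\<Union>j<n. ?L j) \<le> prob E"
    using lone_subset_serving_event \<tau> by (intro finite_measure_mono serving_event_measurable) auto
  ultimately show ?thesis
    by simp
qed

lemma vacant_subset: "vacant s t \<subseteq> vacant s s"
  by (auto simp: vacant_def annulus_empty cnt_def)

lemma prob_le_upper_sum:
  assumes T: "0 < T" and n: "0 < n"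
  shows "prob E \<le> (\<Sum>j<n. exp (- exposure (grid_point T n j))
      * (radial_mass lo qo b (grid_point T n (Suc j)) - radial_mass lo qo b (grid_point T n j))) + exp (- exposure T)"
proof -
  let ?\<tau> = "grid_point T n"
  define U where "U j = vacant (?\<tau> j) (?\<tau> j) - vacant (?\<tau> j) (?\<tau> (Suc j))" for j
  have \<tau>: "0 \<le> ?\<tau> j" "?\<tau> j \<le> ?\<tau> (Suc j)" for j
    using T by (auto intro: grid_point_nonneg grid_point_mono)
  have U: "U j \<in> events" for j
    by (simp add: U_def sets.Diff vacant_measurable)
  have "prob E \<le> prob ((\<Union>j<n. U j) \<union> vacant T T)"
    using serving_event_subset_vacant_cover[OF T n] U vacant_measurable
    by (intro finite_measure_mono) (auto simp: U_def)
  also have "\<dots> \<le> (\<Sum>j<n. prob (U j)) + prob (vacant T T)"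
    using measure_Un_le[of "\<Union>j<n. U j" M "vacant T T"] measure_UNION_le[of "{..<n}" U M] U vacant_measurable
    by auto
  also have "\<dots> \<le> (\<Sum>j<n. exp (- exposure (?\<tau> j))
      * (radial_mass lo qo b (?\<tau> (Suc j)) - radial_mass lo qo b (?\<tau> j))) + exp (- exposure T)"
  proof (intro add_mono sum_mono)
    show "prob (vacant T T) \<le> exp (- exposure T)"
      using prob_vacant[of T T] T by simp
    fix j
    let ?d = "radial_mass lo qo b (?\<tau> (Suc j)) - radial_mass lo qo b (?\<tau> j)"
    have "prob (U j) = exp (- exposure (?\<tau> j)) - exp (- ?d) * exp (- exposure (?\<tau> j))"
      unfolding U_def using \<tau> vacant_subset
      by (simp add: finite_measure_Diff vacant_measurable prob_vacant)
    also have "\<dots> = exp (- exposure (?\<tau> j)) * (1 - exp (- ?d))"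
      by (simp add: algebra_simps)
    also have "\<dots> \<le> exp (- exposure (?\<tau> j)) * ?d"
    proof (rule mult_left_mono)
      show "1 - exp (- ?d) \<le> ?d"
        using exp_ge_add_one_self[of "- ?d"] by linarith
    qed simp
    finally show "prob (U j) \<le> exp (- exposure (?\<tau> j)) * ?d" .
  qed
  finally show ?thesis .
qed

theorem prob_serving_event:
  "prob E = (LINT r:{0<..}|lborel. radial_intensity lo qo b r * exp (- exposure r))"
proof -
  interpret exposure_integral "radial_intensity lo qo b" exposure "2 * pi * lo"
    using own.radial_intensity_bounds exposure_mono exposure_zero by unfold_locales auto
  have cum: "cum = radial_mass lo qo b"
    by (simp add: fun_eq_iff cum_def radial_mass_def)
  show ?thesis
    using lower_sum_le_prob prob_le_upper_sum
    by (intro eq_integral_if_between_riemann_sums filterlim_exposure_at_top)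
      (simp_all add: lower_sum_def upper_sum_def cum)
qed

lemma exp_minus_exposure:
  "exp (- exposure r) = zeta lo qo (radius Po True r) (radius Po False r) * zeta lt qt (radius Pt True r) (radius Pt False r)"
  unfolding exposure_def zeta_eq_radial_mass exp_add[symmetric] by (rule arg_cong[where f = exp]) linarith

theorem prob_serving_event_zeta:
  "prob E = 2 * pi * lo * (LINT r:{0<..}|lborel. r * (if b then qo r else 1 - qo r)
      * zeta lo qo (radius Po True r) (radius Po False r) * zeta lt qt (radius Pt True r) (radius Pt False r))"
  unfolding prob_serving_event exp_minus_exposure
  by (subst set_integral_mult_right[symmetric]) (simp add: radial_intensity_def mult_ac)

end

theorem theorem1:
  fixes M :: "'a measure"
    and \<Psi>m \<Psi>s :: "'a \<Rightarrow> (pt \<times> bool) set"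
    and lm ls Pm Ps B LL LNL aL aNL :: real
    and pmL psL :: "real \<Rightarrow> real"
  assumes lm: "lm > 0" and ls: "ls > 0"
    and Pm: "Pm > 0" and Ps: "Ps > 0" and B: "B > 0"
    and LL: "LL > 0" and LNL: "LNL > 0" and aL: "aL > 0" and aNL: "aNL > 0"
    and pmL_meas: "pmL \<in> borel_measurable borel" and psL_meas: "psL \<in> borel_measurable borel"
    and pmL_range: "\<And>r. r \<ge> 0 \<Longrightarrow> 0 \<le> pmL r \<and> pmL r \<le> 1"
    and psL_range: "\<And>r. r \<ge> 0 \<Longrightarrow> 0 \<le> psL r \<and> psL r \<le> 1"
    and model: "two_tier_marked_ppp M \<Psi>m (marked_intensity lm pmL) \<Psi>s (marked_intensity ls psL)"
  defines "powm \<equiv> rx_power Pm LL LNL aL aNL"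
    and "pows \<equiv> rx_power (B * Ps) LL LNL aL aNL"
    and "k1 \<equiv> (LNL / LL) powr (1 / aNL)"
    and "k2 \<equiv> (B * Ps / Pm) powr (1 / aL)"
    and "k3 \<equiv> (B * Ps / Pm) powr (1 / aNL)"
    and "k4 \<equiv> (LL / LNL) powr (1 / aL)"
    and "\<zeta>1 \<equiv> zeta lm pmL"
    and "\<zeta>2 \<equiv> zeta ls psL"
  shows
    "measure M (serving_event M \<Psi>m powm \<Psi>s pows True) =
       2 * pi * lm * (LINT r:{0<..}|lborel.
          r * pmL r * \<zeta>1 r (k1 * r powr (aL / aNL)) * \<zeta>2 (k2 * r) (k1 * k3 * r powr (aL / aNL))) \<and>
    measure M (serving_event M \<Psi>m powm \<Psi>s pows False) =
       2 * pi * lm * (LINT r:{0<..}|lborel.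
          r * (1 - pmL r) * \<zeta>1 (k4 * r powr (aNL / aL)) r * \<zeta>2 (k2 * k4 * r powr (aNL / aL)) (k3 * r)) \<and>
    measure M (serving_event M \<Psi>s pows \<Psi>m powm True) =
       2 * pi * ls * (LINT r:{0<..}|lborel.
          r * psL r * \<zeta>1 (r / k2) ((k1 / k3) * r powr (aL / aNL)) * \<zeta>2 r (k1 * r powr (aL / aNL))) \<and>
    measure M (serving_event M \<Psi>s pows \<Psi>m powm False) =
       2 * pi * ls * (LINT r:{0<..}|lborel.
          r * (1 - psL r) * \<zeta>1 ((k4 / k2) * r powr (aNL / aL)) (r / k3) * \<zeta>2 (k4 * r powr (aNL / aL)) r)"
proof -
  have tiers: "marked_tier lm pmL" "marked_tier ls psL"
    unfolding marked_tier_def using lm ls pmL_meas psL_meas pmL_range psL_range by auto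
  have macro: "serving_tier M \<Psi>m \<Psi>s lm ls pmL psL Pm (B * Ps) LL LNL aL aNL"
    unfolding serving_tier_def using model tiers lm Pm Ps B LL LNL aL aNL by simp
  have small: "serving_tier M \<Psi>s \<Psi>m ls lm psL pmL (B * Ps) Pm LL LNL aL aNL"
    unfolding serving_tier_def using two_tier_marked_ppp_swap[OF model] tiers ls Pm Ps B LL LNL aL aNL by simp
  have nonzero: "Pm \<noteq> 0" "B \<noteq> 0" "Ps \<noteq> 0" "LL \<noteq> 0" "LNL \<noteq> 0" "aL \<noteq> 0" "aNL \<noteq> 0"
    using Pm B Ps LL LNL aL aNL by simp_all
  have flip: "(Pm / (B * Ps)) powr e = 1 / (B * Ps / Pm) powr e" for e
    using Pm B Ps by (simp add: powr_divide)
  show ?thesis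
    unfolding powm_def pows_def \<zeta>1_def \<zeta>2_def k1_def k2_def k3_def k4_def
      serving_tier.prob_serving_event_zeta[OF macro] serving_tier.prob_serving_event_zeta[OF small]
    by (intro conjI arg_cong[where f = "(*) _"] set_lebesgue_integral_cong)
      (simp_all add: Pm Ps B LL LNL aL aNL nonzero serving_tier.radius_split[OF macro] serving_tier.radius_split[OF small]
        serving_tier.gain_def[OF macro] serving_tier.gain_def[OF small] flip
        serving_tier.expo_def[OF macro] serving_tier.expo_def[OF small] mult_ac)
qed

end
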